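(* For any $h,v$ with $hv\ge n^2$, there is an $[h,v]$-scheme for \textsc{TriangleCount-Adj} on $n$-vertex graphs.
   Context: Annotated streaming model (schemes): a space-bounded Verifier reads an input stream $\sigma$; after the stream ends, an all-powerful Prover sends a help message to the Verifier as a stream. A scheme for a function $f$ consists of the Verifier's randomized streaming algorithm, the honest Prover's help function, and the Verifier's output procedure, outputting a value in $\mathrm{range}(f)\cup\{\bot\}$ ($\bot$ = reject), with perfect completeness (honest help makes the Verifier output $f(\sigma)$ with probability 1) and soundness error at most $1/3$ (for every $\sigma$ and every help message, the probability of outputting a value outside $\{f(\sigma),\bot\}$ is at most $1/3$). An $[h,v]$-scheme uses $\tilde{O}(h)$ bits of help and $\tilde{O}(v)$ bits of Verifier space, where $\tilde{O}$ hides factors polynomial in $\log n$. \textsc{TriangleCount-Adj}: the input is a graph on vertex set $[n]$ given in the adjacency-list (vertex-arrival) streaming model, where for each vertex $v$ the stream presents its full neighbor list $N(v)$ contiguously (vertices appear in some order, each with its neighbor list). The desired output is the number of triangles in the graph. *)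

theory Defs
  imports "HOL-Probability.Probability_Mass_Function"
begin

definition simple_graph :: "nat \<Rightarrow> (nat \<Rightarrow> nat \<Rightarrow> bool) \<Rightarrow> bool" where
  "simple_graph n E \<longleftrightarrow>
     (\<forall>u w. E u w \<longrightarrow> u < n \<and> w < n) \<and> (\<forall>u w. E u w \<longrightarrow> E w u) \<and> (\<forall>u. \<not> E u u)"

definition triangle_count :: "nat \<Rightarrow> (nat \<Rightarrow> nat \<Rightarrow> bool) \<Rightarrow> nat" where
  "triangle_count n E =
     card {(a, b, c). a < b \<and> b < c \<and> c < n \<and> E a b \<and> E b c \<and> E a c}"

text \<open>Adjacency-list (vertex-arrival) stream: a stream token is a pair (v, w) meaning
  "w is a neighbour of v".\<close>
definition adj_stream :: "nat \<Rightarrow> (nat \<Rightarrow> nat \<Rightarrow> bool) \<Rightarrow> (nat \<times> nat) list \<Rightarrow> bool" where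
  "adj_stream n E \<sigma> \<longleftrightarrow>
     (\<exists>vs ls. distinct vs \<and> set vs = {..<n} \<and> length ls = length vs \<and>
        (\<forall>i < length vs. distinct (ls ! i) \<and> set (ls ! i) = {w. E (vs ! i) w}) \<and>
        \<sigma> = concat (map2 (\<lambda>v l. map (Pair v) l) vs ls))"

fun run :: "('s \<Rightarrow> 'a \<Rightarrow> 's pmf) \<Rightarrow> 'a list \<Rightarrow> 's \<Rightarrow> 's pmf" where
  "run step [] s = return_pmf s"
| "run step (x # xs) s = bind_pmf (step s x) (run step xs)"

definition final_state ::
  "bool list pmf \<Rightarrow> (bool list \<Rightarrow> nat \<times> nat \<Rightarrow> bool list pmf) \<Rightarrow> (bool list \<Rightarrow> bool \<Rightarrow> bool list pmf)
   \<Rightarrow> (nat \<times> nat) list \<Rightarrow> bool list \<Rightarrow> bool list pmf" where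
  "final_state init stepI stepH \<sigma> m =
     bind_pmf init (\<lambda>s0. bind_pmf (run stepI \<sigma> s0) (run stepH m))"

text \<open>The Verifier's memory is a bit string of length at most S; it starts in a
  random state (init), processes input tokens and help bits with randomized transitions
  (stepI, stepH) that keep the memory within S bits, and finally outputs a value
  (None = reject).\<close>
definition tc_scheme ::
  "nat \<Rightarrow> nat \<Rightarrow> nat \<Rightarrow> bool list pmf \<Rightarrow> (bool list \<Rightarrow> nat \<times> nat \<Rightarrow> bool list pmf)
   \<Rightarrow> (bool list \<Rightarrow> bool \<Rightarrow> bool list pmf) \<Rightarrow> (bool list \<Rightarrow> nat option)
   \<Rightarrow> ((nat \<times> nat) list \<Rightarrow> bool list) \<Rightarrow> bool" where
  "tc_scheme n H S init stepI stepH out help \<longleftrightarrow>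
     (\<forall>s \<in> set_pmf init. length s \<le> S) \<and>
     (\<forall>s x. length s \<le> S \<longrightarrow> (\<forall>s' \<in> set_pmf (stepI s x). length s' \<le> S)) \<and>
     (\<forall>s b. length s \<le> S \<longrightarrow> (\<forall>s' \<in> set_pmf (stepH s b). length s' \<le> S)) \<and>
     (\<forall>\<sigma>. length (help \<sigma>) \<le> H) \<and>
     (\<forall>E \<sigma>. simple_graph n E \<longrightarrow> adj_stream n E \<sigma> \<longrightarrow>
        measure_pmf.prob (map_pmf out (final_state init stepI stepH \<sigma> (help \<sigma>)))
          {Some (triangle_count n E)} = 1 \<and>
        (\<forall>m. measure_pmf.prob (map_pmf out (final_state init stepI stepH \<sigma> m))
          (- {Some (triangle_count n E), None}) \<le> 1/3))"

end

theory Submission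
  imports Defs "HOL-Computational_Algebra.Polynomial" "HOL-Computational_Algebra.Primes"
    "HOL-Number_Theory.Cong"
begin

text \<open>
  Colour a vertex \<open>b\<close> by \<open>b mod V\<close> and put it in block \<open>b div V < K = \<lceil>n/V\<rceil>\<close>; a pair of
  vertices is determined by its colour pair together with the exponent
  \<open>e(b, c) = (b div V) K + c div V \<le> D = K\<^sup>2 - 1\<close>. For every colour pair \<open>j\<close> let
  \<open>A\<^sub>j = \<Sum> X\<^bsup>D - e(x, w)\<^esup>\<close> over the edges \<open>xw\<close> of colour \<open>j\<close> and
  \<open>B\<^sub>j = \<Sum> X\<^bsup>e(b, c)\<^esup>\<close> over the vertices \<open>y\<close> and pairs \<open>b, c \<in> N(y)\<close> of colour \<open>j\<close>.
  The coefficient of \<open>X\<^sup>D\<close> in \<open>G = \<Sum>\<^sub>j A\<^sub>j B\<^sub>j\<close> counts the triples \<open>(x, w, y)\<close> with \<open>xw, yx, yw\<close>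
  edges, i.e. six times the number of triangles, and \<open>deg G \<le> 2D\<close>.

  The verifier draws \<open>r\<close> modulo a prime \<open>p > 6n\<^sup>3\<close> of \<open>O(log n)\<close> bits. Reading the adjacency
  lists it maintains \<open>A\<^sub>j(r)\<close> and \<open>B\<^sub>j(r)\<close> modulo \<open>p\<close>; the latter is possible because the
  contribution of \<open>y\<close> to \<open>B\<^sub>j(r)\<close> is a row sum times a column sum over \<open>N(y)\<close>. This takes
  \<open>O(V\<^sup>2)\<close> words. The prover sends the \<open>2D + 1 = O(n\<^sup>2/V\<^sup>2)\<close> coefficients of \<open>G\<close>; the
  verifier compares the claimed polynomial with \<open>\<Sum>\<^sub>j A\<^sub>j(r) B\<^sub>j(r)\<close> and outputs the claimed
  coefficient of \<open>X\<^sup>D\<close> divided by 6. A wrong polynomial agrees with \<open>G\<close> at no more than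
  \<open>2D < p/3\<close> points. Taking \<open>V\<^sup>2 \<approx> v\<close> makes the help \<open>O(n\<^sup>2/v) = O(h)\<close> words.
\<close>

section \<open>A prime of logarithmic length\<close>

lemma multiplicity_eq_card_prime_power_dvd:
  fixes p x N :: nat
  assumes "prime p" "0 < x" "x \<le> N"
  shows "multiplicity p x = card {i \<in> {1..N}. p ^ i dvd x}"
proof -
  have "multiplicity p x < 2 ^ multiplicity p x" by (rule less_exp)
  also have "\<dots> \<le> p ^ multiplicity p x"
    using prime_ge_2_nat[OF assms(1)] by (intro power_mono) simp_all
  also have "\<dots> \<le> x" using multiplicity_dvd assms(2) by (rule dvd_imp_le)
  finally have le_N: "multiplicity p x \<le> N" using assms(3) by linarith
  have "p ^ i dvd x \<longleftrightarrow> i \<le> multiplicity p x" for i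
    using assms by (intro power_dvd_iff_le_multiplicity) auto
  hence "{i \<in> {1..N}. p ^ i dvd x} = {i \<in> {1..N}. i \<le> multiplicity p x}" by (simp only:)
  also have "\<dots> = {1..multiplicity p x}" using le_N by auto
  finally show ?thesis by simp
qed

lemma multiplicity_fact_nat:
  fixes p n N :: nat
  assumes "prime p" "n \<le> N"
  shows "multiplicity p (fact n :: nat) = (\<Sum>i\<in>{1..N}. n div p ^ i)"
  using assms(2)
proof (induction n)
  case 0
  then show ?case by simp
next
  case (Suc n)
  have card_sum: "card {i \<in> {1..N}. p ^ i dvd Suc n} = (\<Sum>i\<in>{1..N}. if p ^ i dvd Suc n then 1 else 0)"
    by (simp only: card_eq_sum sum.inter_filter[OF finite_atLeastAtMost])
  have "multiplicity p (fact (Suc n) :: nat) = multiplicity p (Suc n * fact n)"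
    by (simp del: mult_Suc)
  also have "\<dots> = multiplicity p (Suc n) + multiplicity p (fact n :: nat)"
    using assms(1) by (simp add: prime_elem_multiplicity_mult_distrib del: mult_Suc)
  also have "\<dots> = (\<Sum>i\<in>{1..N}. (if p ^ i dvd Suc n then 1 else 0) + n div p ^ i)"
    using multiplicity_eq_card_prime_power_dvd[OF assms(1) _ Suc.prems] Suc card_sum
    by (simp add: sum.distrib)
  also have "\<dots> = (\<Sum>i\<in>{1..N}. Suc n div p ^ i)"
    by (intro sum.cong refl) (simp add: div_Suc dvd_eq_mod_eq_0)
  finally show ?case .
qed

lemma two_mul_div_le:
  fixes m q :: nat
  assumes q: "0 < q"
  shows "2 * m div q \<le> 2 * (m div q) + 1"
proof -
  have "2 * m < (2 * (m div q) + 2) * q"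
    using mod_less_divisor[OF q, of m] div_mult_mod_eq[of m q]
    unfolding distrib_right mult.assoc by linarith
  hence "2 * m div q < 2 * (m div q) + 2" by (rule less_mult_imp_div_less)
  thus ?thesis by linarith
qed

lemma prime_power_multiplicity_central_binomial_le:
  fixes p m :: nat
  assumes p: "prime p" and m: "0 < m"
  shows "p ^ multiplicity p (2 * m choose m) \<le> 2 * m"
proof (rule ccontr)
  define k where "k = multiplicity p (2 * m choose m)"
  assume "\<not> p ^ multiplicity p (2 * m choose m) \<le> 2 * m"
  hence big: "2 * m < p ^ k" unfolding k_def by simp
  have p0: "0 < p ^ i" for i using prime_gt_0_nat[OF p] by simp
  have fact: "fact (2 * m) = (fact m * fact m * (2 * m choose m) :: nat)"
    using binomial_fact_lemma[of m "2 * m"] by (simp add: mult_2)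
  have "multiplicity p (fact (2 * m) :: nat) = 2 * multiplicity p (fact m :: nat) + k"
    unfolding fact k_def using p by (simp add: prime_elem_multiplicity_mult_distrib)
  hence "k = (\<Sum>i\<in>{1..2*m}. 2 * m div p ^ i) - (\<Sum>i\<in>{1..2*m}. 2 * (m div p ^ i))"
    using multiplicity_fact_nat[OF p, of "2 * m" "2 * m"] multiplicity_fact_nat[OF p, of m "2 * m"]
    by (simp add: sum_distrib_left)
  also have "\<dots> = (\<Sum>i\<in>{1..2*m}. 2 * m div p ^ i - 2 * (m div p ^ i))"
  proof (intro sum_subtractf_nat[symmetric] ballI)
    fix i
    show "2 * (m div p ^ i) \<le> 2 * m div p ^ i"
      using p0[of i] by (simp add: less_eq_div_iff_mult_less_eq)
  qed
  \<comment> \<open>Each term of Legendre's formula for \<open>C(2m, m)\<close> is 0 or 1, and 0 once \<open>p\<^sup>i > 2m\<close>.\<close>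
  also have "\<dots> \<le> (\<Sum>i\<in>{1..2*m}. if p ^ i \<le> 2 * m then 1 else 0)"
  proof (rule sum_mono)
    fix i
    show "2 * m div p ^ i - 2 * (m div p ^ i) \<le> (if p ^ i \<le> 2 * m then 1 else 0)"
      using two_mul_div_le[OF p0, of m i] by (auto simp: not_le)
  qed
  also have "\<dots> = card {i \<in> {1..2*m}. p ^ i \<le> 2 * m}"
    by (simp only: card_eq_sum sum.inter_filter[OF finite_atLeastAtMost])
  also have "\<dots> \<le> card {1..<k}"
  proof (rule card_mono)
    show "{i \<in> {1..2*m}. p ^ i \<le> 2 * m} \<subseteq> {1..<k}"
    proof
      fix i assume i: "i \<in> {i \<in> {1..2*m}. p ^ i \<le> 2 * m}"
      hence "p ^ i < p ^ k" using big by simp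
      hence "i < k" using power_less_imp_less_exp[OF prime_gt_1_nat[OF p]] by blast
      thus "i \<in> {1..<k}" using i by simp
    qed
  qed simp
  finally have "k \<le> k - 1" by simp
  with big m show False by (cases k) auto
qed

lemma two_mul_cube_le_four_pow:
  fixes L :: nat
  assumes "2 \<le> L"
  shows "2 * L ^ 3 \<le> 4 ^ L"
  using assms
proof (induction L rule: nat_induct_at_least)
  case base
  then show ?case by simp
next
  case (Suc L)
  have "2 * (L * L) \<le> L * L * L" "2 * L \<le> L * L"
    using mult_le_mono1[OF Suc.hyps, of "L * L"] mult_le_mono1[OF Suc.hyps, of L] by (simp_all add: mult.assoc)
  hence "3 * (L * L) + 3 * L + 1 \<le> 3 * (L * L * L)"
    using Suc.hyps by linarith
  hence "3 * L ^ 2 + 3 * L + 1 \<le> 3 * L ^ 3"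
    by (simp add: power2_eq_square power3_eq_cube)
  hence "Suc L ^ 3 \<le> 4 * L ^ 3"
    by (simp add: power2_eq_square power3_eq_cube algebra_simps)
  thus ?case using Suc.IH by simp
qed

text \<open>A weak Bertrand postulate: if every prime factor of \<open>C(2m, m)\<close> with \<open>m = L\<^sup>3\<close> were
  at most \<open>L\<close>, then, each prime power dividing it being at most \<open>2m\<close>, we would get
  \<open>4\<^sup>m / (2m) \<le> C(2m, m) \<le> (2m)\<^sup>L\<close>, which fails for \<open>L \<ge> 2\<close>.\<close>
lemma exists_prime_between_cube:
  fixes L :: nat
  assumes L: "2 \<le> L"
  shows "\<exists>p. prime p \<and> L < p \<and> p \<le> 2 * L ^ 3"
proof (rule ccontr)
  assume no: "\<not> ?thesis"
  define m where "m = L ^ 3"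
  define C where "C = 2 * m choose m"
  have m0: "0 < m" unfolding m_def using L by simp
  have "prime_factors C \<subseteq> {1..L}"
  proof
    fix q assume q: "q \<in> prime_factors C"
    have "C dvd fact (2 * m)"
      using binomial_fact_lemma[of m "2 * m"] unfolding C_def by (metis dvd_triv_right le_add2 mult_2)
    have "prime q" using q by (rule in_prime_factors_imp_prime)
    moreover have "q \<le> 2 * m"
      using q \<open>C dvd fact (2 * m)\<close> prime_dvd_fact_iff[OF \<open>prime q\<close>] by (auto intro: dvd_trans)
    ultimately have "q \<le> L" using no unfolding m_def by (meson leI)
    thus "q \<in> {1..L}" using prime_ge_1_nat[OF \<open>prime q\<close>] by simp
  qed
  hence card_pf: "card (prime_factors C) \<le> L"
    using card_mono[of "{1..L}"] by fastforce
  have "C = (\<Prod>q\<in>prime_factors C. q ^ multiplicity q C)"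
    using prod_prime_factors[of C] unfolding C_def by simp
  also have "\<dots> \<le> (\<Prod>q\<in>prime_factors C. 2 * m)"
    by (rule prod_mono) (use prime_power_multiplicity_central_binomial_le m0 in \<open>auto simp: C_def\<close>)
  also have "\<dots> = (2 * m) ^ card (prime_factors C)" by simp
  also have "\<dots> \<le> (2 * m) ^ L"
    using card_pf m0 by (intro power_increasing) simp_all
  finally have C_le: "C \<le> (2 * m) ^ L" .
  have "real (4 ^ m) \<le> real (C * (2 * m))"
    using central_binomial_lower_bound[OF m0] m0 by (simp add: C_def field_simps)
  hence "4 ^ m \<le> C * (2 * m)" by (simp only: of_nat_le_iff)
  also have "\<dots> \<le> (2 * m) ^ (L + 1)" using C_le by simp
  also have "\<dots> \<le> (4 ^ L) ^ (L + 1)"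
    using two_mul_cube_le_four_pow[OF L] unfolding m_def by (rule power_mono) simp
  also have "\<dots> = 4 ^ (L * (L + 1))" by (simp only: power_mult)
  also have "\<dots> < 4 ^ m"
  proof -
    have "L + 1 < L * L" using mult_le_mono1[OF L, of L] L by linarith
    hence "L * (L + 1) < L * (L * L)" using L by (intro mult_strict_left_mono) simp_all
    thus ?thesis unfolding m_def by (simp add: power3_eq_cube)
  qed
  finally show False by simp
qed

section \<open>Polynomials modulo a prime\<close>

lemma dvd_coeff_synthetic_div:
  fixes f :: "int poly"
  assumes "p dvd poly f a" "\<And>j. p dvd coeff (synthetic_div f a) j"
  shows "p dvd coeff f i"
proof -
  define q where "q = synthetic_div f a"
  have f_eq: "f = [:- a, 1:] * q + [:poly f a:]"
    unfolding q_def by (rule synthetic_div_correct'[symmetric])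
  have "coeff f i = coeff q (i - 1) * (if i = 0 then 0 else 1) - a * coeff q i + (if i = 0 then poly f a else 0)"
    by (subst f_eq) (cases i; simp add: coeff_pCons)
  thus ?thesis using assms unfolding q_def by simp
qed

lemma prime_dvd_poly_synthetic_div:
  fixes f :: "int poly"
  assumes "prime p" "p dvd poly f a" "p dvd poly f r" "\<not> p dvd r - a"
  shows "p dvd poly (synthetic_div f a) r"
proof -
  define q where "q = synthetic_div f a"
  have f_eq: "f = [:- a, 1:] * q + [:poly f a:]"
    unfolding q_def by (rule synthetic_div_correct'[symmetric])
  have "poly f r = (r - a) * poly q r + poly f a"
    by (subst f_eq) (simp add: algebra_simps)
  hence "p dvd (r - a) * poly q r" using assms(2,3) by (metis dvd_diff add_diff_cancel_right')
  thus ?thesis unfolding q_def using assms(1,4) prime_dvd_mult_iff by blast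
qed

lemma card_roots_mod_prime_le_degree:
  fixes f :: "int poly" and p :: int
  assumes p: "prime p" and nz: "\<not> p dvd coeff f i"
  shows "card {r \<in> {0..<p}. p dvd poly f r} \<le> degree f"
  using nz
proof (induction "degree f" arbitrary: f i rule: less_induct)
  case less
  define R where "R g = {r \<in> {0..<p}. p dvd poly g r}" for g
  show ?case
  proof (cases "R f = {}")
    case True
    then show ?thesis unfolding R_def by (metis card.empty le0)
  next
    case False
    then obtain a where a: "a \<in> {0..<p}" "p dvd poly f a" unfolding R_def by blast
    define q where "q = synthetic_div f a"
    obtain j where j: "\<not> p dvd coeff q j"
      using dvd_coeff_synthetic_div[OF a(2)] less.prems unfolding q_def by blast
    hence "q \<noteq> 0" by auto
    hence deg_q: "degree q < degree f"
      unfolding q_def synthetic_div_eq_0_iff degree_synthetic_div by simp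
    have "R f \<subseteq> insert a (R q)"
    proof
      fix r assume r: "r \<in> R f"
      show "r \<in> insert a (R q)"
      proof (cases "r = a")
        case False
        have "\<not> p dvd r - a"
        proof
          assume "p dvd r - a"
          hence "\<bar>p\<bar> \<le> \<bar>r - a\<bar>" using False by (intro dvd_imp_le_int) simp_all
          with r a(1) show False unfolding R_def by auto
        qed
        with r show ?thesis
          using prime_dvd_poly_synthetic_div[OF p a(2)] unfolding R_def q_def by simp
      qed simp
    qed
    moreover have "finite (R q)" unfolding R_def by (rule finite_subset[of _ "{0..<p}"]) auto
    ultimately have "card (R f) \<le> card (insert a (R q))" by (intro card_mono) simp_all
    also have "\<dots> \<le> Suc (card (R q))" by (rule card_insert_le_m1) simp_all
    also have "\<dots> \<le> Suc (degree q)" using less.hyps[OF deg_q j] unfolding R_def by simp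
    also have "\<dots> \<le> degree f" using deg_q by simp
    finally show ?thesis unfolding R_def .
  qed
qed

lemma card_cong_poly_le_degree:
  fixes f g :: "int poly" and p :: int
  assumes "prime p" "\<not> p dvd coeff (f - g) i"
  shows "card {r \<in> {0..<p}. [poly f r = poly g r] (mod p)} \<le> max (degree f) (degree g)"
proof -
  have "{r \<in> {0..<p}. [poly f r = poly g r] (mod p)} = {r \<in> {0..<p}. p dvd poly (f - g) r}"
    by (simp add: cong_iff_dvd_diff)
  hence "card {r \<in> {0..<p}. [poly f r = poly g r] (mod p)} \<le> degree (f - g)"
    using card_roots_mod_prime_le_degree[OF assms] by simp
  thus ?thesis using degree_diff_le_max[of f g] by linarith
qed

lemma poly_eq_sum_lessThan:
  fixes f :: "'a::comm_semiring_1 poly"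
  assumes "degree f < N"
  shows "poly f x = (\<Sum>i<N. coeff f i * x ^ i)"
  unfolding poly_altdef using assms
  by (intro sum.mono_neutral_left) (auto simp: coeff_eq_0)

section \<open>Numbers as blocks of bits\<close>

definition bit_blocks :: "nat \<Rightarrow> nat \<Rightarrow> (nat \<Rightarrow> int) \<Rightarrow> bool list" where
  "bit_blocks w N c = map (\<lambda>k. bit (c (k div w)) (k mod w)) [0..<N * w]"

definition block_value :: "nat \<Rightarrow> bool list \<Rightarrow> nat \<Rightarrow> int" where
  "block_value w m i = (\<Sum>t<w. if m ! (i * w + t) then 2 ^ t else 0)"

lemma length_bit_blocks [simp]: "length (bit_blocks w N c) = N * w"
  by (simp add: bit_blocks_def)

lemma sum_bits_eq_mod: "(\<Sum>t<w. if bit x t then 2 ^ t else 0) = x mod 2 ^ w" for x :: int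
proof (induction w arbitrary: x)
  case (Suc w)
  have "(\<Sum>t<Suc w. if bit x t then 2 ^ t else 0)
      = (if bit x 0 then 1 else 0) + (\<Sum>t<w. if bit x (Suc t) then 2 ^ Suc t else (0::int))"
    by (subst sum.lessThan_Suc_shift) simp
  also have "\<dots> = (if bit x 0 then 1 else 0) + 2 * (\<Sum>t<w. if bit (x div 2) t then 2 ^ t else 0)"
    by (simp add: sum_distrib_left bit_Suc if_distrib[of "(*) 2"] cong: if_cong)
  also have "\<dots> = x mod 2 ^ Suc w"
    using Suc.IH[of "x div 2"] by (simp add: zmod_zmult2_eq[of "2 ^ w" x 2] bit_0 odd_iff_mod_2_eq_one mult.commute)
  finally show ?case .
qed simp

lemma block_value_bit_blocks:
  assumes "i < N"
  shows "block_value w (bit_blocks w N c) i = c i mod 2 ^ w"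
proof -
  have "i * w + t < N * w" if "t < w" for t :: nat
  proof -
    have "i * w + t < (i + 1) * w" using that by simp
    also have "\<dots> \<le> N * w" using assms by (intro mult_right_mono) simp_all
    finally show ?thesis .
  qed
  hence "block_value w (bit_blocks w N c) i = (\<Sum>t<w. if bit (c i) t then 2 ^ t else 0)"
    unfolding block_value_def bit_blocks_def by (intro sum.cong refl) simp
  thus ?thesis by (simp add: sum_bits_eq_mod)
qed

lemma sum_lessThan_mult_div_mod:
  fixes N w :: nat and g :: "nat \<Rightarrow> nat \<Rightarrow> 'a::comm_monoid_add"
  assumes "0 < w"
  shows "(\<Sum>k<N * w. g (k div w) (k mod w)) = (\<Sum>i<N. \<Sum>t<w. g i t)"
proof -
  have "(\<Sum>k<N * w. g (k div w) (k mod w)) = (\<Sum>i<N. \<Sum>k\<in>{i * w..<i * w + w}. g (k div w) (k mod w))"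
    by (rule sum.nat_group[symmetric])
  also have "\<dots> = (\<Sum>i<N. \<Sum>t<w. g i t)"
  proof (rule sum.cong[OF refl])
    fix i
    have "(\<Sum>k\<in>{i * w..<i * w + w}. g (k div w) (k mod w)) = (\<Sum>t\<in>{0..<w}. g ((t + i * w) div w) ((t + i * w) mod w))"
      using sum.shift_bounds_nat_ivl[of "\<lambda>k. g (k div w) (k mod w)" 0 "i * w" w] by (simp add: add.commute)
    also have "\<dots> = (\<Sum>t<w. g i t)" using assms by (intro sum.cong) auto
    finally show "(\<Sum>k\<in>{i * w..<i * w + w}. g (k div w) (k mod w)) = (\<Sum>t<w. g i t)" .
  qed
  finally show ?thesis .
qed

lemma weighted_bit_sum_eq:
  fixes r :: int
  assumes "length m = N * w" "0 < w"
  shows "(\<Sum>k<length m. if m ! k then 2 ^ (k mod w) * r ^ (k div w) else 0) = (\<Sum>i<N. block_value w m i * r ^ i)"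
proof -
  define g where "g i t = (if m ! (i * w + t) then 2 ^ t * r ^ i else 0)" for i t
  have "(\<Sum>k<length m. if m ! k then 2 ^ (k mod w) * r ^ (k div w) else 0) = (\<Sum>k<N * w. g (k div w) (k mod w))"
    unfolding assms(1) g_def by simp
  also have "\<dots> = (\<Sum>i<N. \<Sum>t<w. g i t)" by (rule sum_lessThan_mult_div_mod[OF assms(2)])
  also have "\<dots> = (\<Sum>i<N. block_value w m i * r ^ i)"
    unfolding g_def block_value_def by (simp add: sum_distrib_right if_distrib[of "\<lambda>x. x * _"] cong: if_cong)
  finally show ?thesis .
qed

lemma bit_sum_block_eq:
  assumes "length m = N * w" "0 < w" "i < N"
  shows "(\<Sum>k<length m. if m ! k \<and> k div w = i then 2 ^ (k mod w) else 0) = block_value w m i"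
proof -
  define g where "g i' t = (if m ! (i' * w + t) \<and> i' = i then 2 ^ t else (0::int))" for i' t
  have "(\<Sum>k<length m. if m ! k \<and> k div w = i then 2 ^ (k mod w) else 0) = (\<Sum>k<N * w. g (k div w) (k mod w))"
    unfolding assms(1) g_def by simp
  also have "\<dots> = (\<Sum>i'<N. \<Sum>t<w. g i' t)" by (rule sum_lessThan_mult_div_mod[OF assms(2)])
  also have "\<dots> = (\<Sum>i'<N. if i' = i then \<Sum>t<w. if m ! (i' * w + t) then 2 ^ t else 0 else 0)"
    unfolding g_def by (intro sum.cong refl) auto
  also have "\<dots> = block_value w m i"
    using assms(3) by (simp add: block_value_def)
  finally show ?thesis .
qed

section \<open>Counting ordered triangles\<close>

lemma card_triples_eq_sum:
  fixes n :: nat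
  shows "card {(a, b, c). a < n \<and> b < n \<and> c < n \<and> P a b c} = (\<Sum>a<n. \<Sum>b<n. \<Sum>c<n. if P a b c then 1 else 0)"
proof -
  have "{(a, b, c). a < n \<and> b < n \<and> c < n \<and> P a b c} = (SIGMA a:{..<n}. SIGMA b:{..<n}. {c \<in> {..<n}. P a b c})"
    by auto
  thus ?thesis by (simp add: card_SigmaI sum.inter_filter[symmetric])
qed

definition permute3 :: "nat \<Rightarrow> 'a \<times> 'a \<times> 'a \<Rightarrow> 'a \<times> 'a \<times> 'a" where
  "permute3 k = (\<lambda>(a, b, c). [(a, b, c), (a, c, b), (b, a, c), (b, c, a), (c, a, b), (c, b, a)] ! k)"

lemma card_ordered_triangles:
  assumes "simple_graph n E"
  shows "card {(a, b, c). a < n \<and> b < n \<and> c < n \<and> E a b \<and> E b c \<and> E a c} = 6 * triangle_count n E"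
proof -
  define S where "S = {(a, b, c). a < b \<and> b < c \<and> c < n \<and> E a b \<and> E b c \<and> E a c}"
  have sym: "E u w \<Longrightarrow> E w u" and irrefl: "\<not> E u u" for u w
    using assms unfolding simple_graph_def by blast+
  have six: "{..<6::nat} = {0, 1, 2, 3, 4, 5}" by auto
  have "{(a, b, c). a < n \<and> b < n \<and> c < n \<and> E a b \<and> E b c \<and> E a c}
      = (\<lambda>(k, t). permute3 k t) ` ({..<6} \<times> S)"
  proof (intro equalityI subsetI)
    fix t assume "t \<in> {(a, b, c). a < n \<and> b < n \<and> c < n \<and> E a b \<and> E b c \<and> E a c}"
    then obtain a b c where t: "t = (a, b, c)" and abc: "a < n" "b < n" "c < n" "E a b" "E b c" "E a c"
      by blast
    have img: "t \<in> (\<lambda>(k, t). permute3 k t) ` ({..<6} \<times> S)"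
      if "permute3 k s = t" "k < 6" "s \<in> S" for k s
      using that by force
    have "a \<noteq> b" "b \<noteq> c" "a \<noteq> c" using abc irrefl by auto
    then consider "a < b" "b < c" | "a < c" "c < b" | "b < a" "a < c" | "b < c" "c < a"
      | "c < a" "a < b" | "c < b" "b < a"
      by linarith
    then show "t \<in> (\<lambda>(k, t). permute3 k t) ` ({..<6} \<times> S)"
    proof cases
      case 1 show ?thesis by (rule img[of 0 "(a, b, c)"]) (use 1 abc in \<open>auto simp: t S_def permute3_def\<close>)
    next
      case 2 show ?thesis by (rule img[of 1 "(a, c, b)"]) (use 2 abc sym in \<open>auto simp: t S_def permute3_def\<close>)
    next
      case 3 show ?thesis by (rule img[of 2 "(b, a, c)"]) (use 3 abc sym in \<open>auto simp: t S_def permute3_def\<close>)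
    next
      case 4 show ?thesis by (rule img[of 4 "(b, c, a)"]) (use 4 abc sym in \<open>auto simp: t S_def permute3_def\<close>)
    next
      case 5 show ?thesis by (rule img[of 3 "(c, a, b)"]) (use 5 abc sym in \<open>auto simp: t S_def permute3_def\<close>)
    next
      case 6 show ?thesis by (rule img[of 5 "(c, b, a)"]) (use 6 abc sym in \<open>auto simp: t S_def permute3_def\<close>)
    qed
  next
    fix t assume "t \<in> (\<lambda>(k, t). permute3 k t) ` ({..<6} \<times> S)"
    thus "t \<in> {(a, b, c). a < n \<and> b < n \<and> c < n \<and> E a b \<and> E b c \<and> E a c}"
      unfolding S_def six permute3_def using sym by auto
  qed
  moreover have "inj_on (\<lambda>(k, t). permute3 k t) ({..<6} \<times> S)"
    unfolding S_def six permute3_def by (auto simp: inj_on_def)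
  moreover have "finite S"
    unfolding S_def by (rule finite_subset[of _ "{..<n} \<times> {..<n} \<times> {..<n}"]) auto
  ultimately show ?thesis
    by (simp add: card_image card_cartesian_product S_def triangle_count_def)
qed

section \<open>Finite-state verifiers\<close>

lemma run_return_pmf:
  "run (\<lambda>s x. return_pmf (f s x)) xs s = return_pmf (foldl f s xs)"
  by (induction xs arbitrary: s) (simp_all add: bind_return_pmf)

definition encode_step :: "('s \<Rightarrow> 'b) \<Rightarrow> 's set \<Rightarrow> ('s \<Rightarrow> 'a \<Rightarrow> 's) \<Rightarrow> 'b \<Rightarrow> 'a \<Rightarrow> 'b" where
  "encode_step enc X st t a = (if t \<in> enc ` X then enc (st (the_inv_into X enc t) a) else t)"

lemma foldl_encode_step:
  assumes "inj_on enc X" "s \<in> X" "\<And>s a. s \<in> X \<Longrightarrow> st s a \<in> X"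
  shows "foldl (encode_step enc X st) (enc s) xs = enc (foldl st s xs)"
  using assms(2)
  by (induction xs arbitrary: s) (simp_all add: encode_step_def the_inv_into_f_f[OF assms(1)] assms(3))

lemma foldl_closed:
  assumes "s \<in> X" "\<And>s a. s \<in> X \<Longrightarrow> st s a \<in> X"
  shows "foldl st s xs \<in> X"
  using assms by (induction xs arbitrary: s) simp_all

lemma bit_encode_finite_state_machine:
  fixes X :: "'s set" and init0 :: "'s pmf" and stI :: "'s \<Rightarrow> nat \<times> nat \<Rightarrow> 's"
    and stH :: "'s \<Rightarrow> bool \<Rightarrow> 's" and out0 :: "'s \<Rightarrow> 'b"
  assumes "finite X" and "card X \<le> 2 ^ S" and init0: "set_pmf init0 \<subseteq> X"
    and stI: "\<And>s x. s \<in> X \<Longrightarrow> stI s x \<in> X" and stH: "\<And>s b. s \<in> X \<Longrightarrow> stH s b \<in> X"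
  obtains init stepI stepH out where
    "\<forall>s \<in> set_pmf init. length s \<le> S"
    "\<forall>s x. length s \<le> S \<longrightarrow> (\<forall>s' \<in> set_pmf (stepI s x). length s' \<le> S)"
    "\<forall>s b. length s \<le> S \<longrightarrow> (\<forall>s' \<in> set_pmf (stepH s b). length s' \<le> S)"
    "\<And>\<sigma> m. map_pmf out (final_state init stepI stepH \<sigma> m)
        = map_pmf (\<lambda>s. out0 (foldl stH (foldl stI s \<sigma>) m)) init0"
proof -
  have "card X \<le> card {xs :: bool list. length xs = S}"
    using assms(2) card_lists_length_eq[of "UNIV :: bool set" S] by simp
  moreover have "finite {xs :: bool list. length xs = S}"
    using finite_lists_length_eq[of "UNIV :: bool set" S] by simp
  ultimately obtain enc :: "'s \<Rightarrow> bool list" where enc: "inj_on enc X" "enc ` X \<subseteq> {xs. length xs = S}"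
    using card_le_inj[OF assms(1)] by blast
  have len_enc: "s \<in> X \<Longrightarrow> length (enc s) = S" for s using enc(2) by auto
  define stepI where "stepI t x = return_pmf (encode_step enc X stI t x)" for t x
  define stepH where "stepH t b = return_pmf (encode_step enc X stH t b)" for t b
  show ?thesis
  proof
    show "\<forall>s \<in> set_pmf (map_pmf enc init0). length s \<le> S" using init0 len_enc by auto
    show "\<forall>s x. length s \<le> S \<longrightarrow> (\<forall>s' \<in> set_pmf (stepI s x). length s' \<le> S)"
      using stI by (auto simp: stepI_def encode_step_def the_inv_into_f_f[OF enc(1)] len_enc)
    show "\<forall>s b. length s \<le> S \<longrightarrow> (\<forall>s' \<in> set_pmf (stepH s b). length s' \<le> S)"
      using stH by (auto simp: stepH_def encode_step_def the_inv_into_f_f[OF enc(1)] len_enc)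
    fix \<sigma> m
    have fold_enc: "foldl (encode_step enc X stH) (foldl (encode_step enc X stI) (enc s) \<sigma>) m
        = enc (foldl stH (foldl stI s \<sigma>) m)" if "s \<in> X" for s
      using that foldl_encode_step[OF enc(1), where st = stI] foldl_encode_step[OF enc(1), where st = stH]
        foldl_closed[where st = stI] stI stH by simp
    have "final_state (map_pmf enc init0) stepI stepH \<sigma> m
        = bind_pmf init0 (\<lambda>s. return_pmf (enc (foldl stH (foldl stI s \<sigma>) m)))"
      unfolding final_state_def bind_map_pmf stepI_def stepH_def run_return_pmf
      using init0 fold_enc by (intro bind_pmf_cong refl) (auto simp: bind_return_pmf)
    also have "\<dots> = map_pmf (\<lambda>s. enc (foldl stH (foldl stI s \<sigma>) m)) init0"
      by (simp add: map_pmf_def)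
    also have "map_pmf (out0 \<circ> the_inv_into X enc) \<dots> = map_pmf (\<lambda>s. out0 (foldl stH (foldl stI s \<sigma>) m)) init0"
      unfolding pmf.map_comp o_def using init0 foldl_closed[where st = stI] foldl_closed[where st = stH] stI stH
      by (intro map_pmf_cong refl) (auto simp: the_inv_into_f_f[OF enc(1)])
    finally show "map_pmf (out0 \<circ> the_inv_into X enc) (final_state (map_pmf enc init0) stepI stepH \<sigma> m)
        = map_pmf (\<lambda>s. out0 (foldl stH (foldl stI s \<sigma>) m)) init0" .
  qed
qed

lemma tc_scheme_of_finite_state_verifier:
  fixes X :: "'s set" and init0 :: "'s pmf" and stI :: "'s \<Rightarrow> nat \<times> nat \<Rightarrow> 's"
    and stH :: "'s \<Rightarrow> bool \<Rightarrow> 's" and out0 :: "'s \<Rightarrow> nat option"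
  assumes "finite X" and "card X \<le> 2 ^ S" and "set_pmf init0 \<subseteq> X"
    and "\<And>s x. s \<in> X \<Longrightarrow> stI s x \<in> X" and "\<And>s b. s \<in> X \<Longrightarrow> stH s b \<in> X"
    and "\<And>\<sigma>. length (help \<sigma>) \<le> H"
    and complete: "\<And>E \<sigma> s. simple_graph n E \<Longrightarrow> adj_stream n E \<sigma> \<Longrightarrow> s \<in> set_pmf init0 \<Longrightarrow>
      out0 (foldl stH (foldl stI s \<sigma>) (help \<sigma>)) = Some (triangle_count n E)"
    and sound: "\<And>E \<sigma> m. simple_graph n E \<Longrightarrow> adj_stream n E \<sigma> \<Longrightarrow>
      measure_pmf.prob init0 {s. out0 (foldl stH (foldl stI s \<sigma>) m) \<notin> {Some (triangle_count n E), None}}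
        \<le> 1/3"
  shows "\<exists>init stepI stepH out. tc_scheme n H S init stepI stepH out help"
proof -
  obtain init stepI stepH out where bounded:
    "\<forall>s \<in> set_pmf init. length s \<le> S"
    "\<forall>s x. length s \<le> S \<longrightarrow> (\<forall>s' \<in> set_pmf (stepI s x). length s' \<le> S)"
    "\<forall>s b. length s \<le> S \<longrightarrow> (\<forall>s' \<in> set_pmf (stepH s b). length s' \<le> S)"
    and out: "\<And>\<sigma> m. map_pmf out (final_state init stepI stepH \<sigma> m)
        = map_pmf (\<lambda>s. out0 (foldl stH (foldl stI s \<sigma>) m)) init0"
    using bit_encode_finite_state_machine[of X S init0 stI stH out0, OF assms(1-5)] by blast
  have "tc_scheme n H S init stepI stepH out help"
    unfolding tc_scheme_def
  proof (intro conjI)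
    show "\<forall>\<sigma>. length (help \<sigma>) \<le> H" using assms(6) by blast
    show "\<forall>E \<sigma>. simple_graph n E \<longrightarrow> adj_stream n E \<sigma> \<longrightarrow>
        measure_pmf.prob (map_pmf out (final_state init stepI stepH \<sigma> (help \<sigma>)))
          {Some (triangle_count n E)} = 1 \<and>
        (\<forall>m. measure_pmf.prob (map_pmf out (final_state init stepI stepH \<sigma> m))
          (- {Some (triangle_count n E), None}) \<le> 1/3)"
    proof (intro allI impI conjI)
      fix E \<sigma> m assume G: "simple_graph n E" "adj_stream n E \<sigma>"
      have "map_pmf out (final_state init stepI stepH \<sigma> (help \<sigma>))
          = map_pmf (\<lambda>_. Some (triangle_count n E)) init0"
        unfolding out using complete[OF G] by (intro map_pmf_cong) simp_all
      thus "measure_pmf.prob (map_pmf out (final_state init stepI stepH \<sigma> (help \<sigma>)))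
          {Some (triangle_count n E)} = 1" by (simp add: map_pmf_const)
      show "measure_pmf.prob (map_pmf out (final_state init stepI stepH \<sigma> m))
          (- {Some (triangle_count n E), None}) \<le> 1/3"
        unfolding out measure_map_pmf vimage_def using sound[OF G, of m] by simp
    qed
  qed (fact bounded)+
  thus ?thesis by blast
qed

definition stream_graph :: "(nat \<times> nat) list \<Rightarrow> nat \<Rightarrow> nat \<Rightarrow> bool" where
  "stream_graph \<sigma> u v \<longleftrightarrow> (u, v) \<in> set \<sigma>"

lemma stream_graph_adj_stream:
  assumes "simple_graph n E" "adj_stream n E \<sigma>"
  shows "stream_graph \<sigma> = E"
proof (intro ext)
  fix u v
  obtain vs ls where vs: "set vs = {..<n}" "length ls = length vs"
    and ls: "\<forall>i < length vs. set (ls ! i) = {w. E (vs ! i) w}"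
    and \<sigma>: "\<sigma> = concat (map2 (\<lambda>v l. map (Pair v) l) vs ls)"
    using assms(2) unfolding adj_stream_def by blast
  have "(u, v) \<in> set \<sigma> \<longleftrightarrow> (\<exists>i < length vs. u = vs ! i \<and> v \<in> set (ls ! i))"
    unfolding \<sigma> using vs(2) by (force simp: set_zip)
  also have "\<dots> \<longleftrightarrow> E u v"
  proof
    assume "E u v"
    hence "u \<in> set vs" using vs(1) assms(1) unfolding simple_graph_def by auto
    then obtain i where "i < length vs" "u = vs ! i" by (auto simp: in_set_conv_nth)
    thus "\<exists>i < length vs. u = vs ! i \<and> v \<in> set (ls ! i)" using ls \<open>E u v\<close> by auto
  qed (use ls in auto)
  finally show "stream_graph \<sigma> u v = E u v" unfolding stream_graph_def .
qed

lemma card_funs_with_default_le: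
  assumes "finite A" "finite B"
  shows "finite {f. \<forall>i. (i \<in> A \<longrightarrow> f i \<in> B) \<and> (i \<notin> A \<longrightarrow> f i = d)}
    \<and> card {f. \<forall>i. (i \<in> A \<longrightarrow> f i \<in> B) \<and> (i \<notin> A \<longrightarrow> f i = d)} \<le> card B ^ card A"
proof -
  have "{f. \<forall>i. (i \<in> A \<longrightarrow> f i \<in> B) \<and> (i \<notin> A \<longrightarrow> f i = d)}
      \<subseteq> (\<lambda>g i. if i \<in> A then g i else d) ` (A \<rightarrow>\<^sub>E B)"
  proof
    fix f assume f: "f \<in> {f. \<forall>i. (i \<in> A \<longrightarrow> f i \<in> B) \<and> (i \<notin> A \<longrightarrow> f i = d)}"
    hence "f = (\<lambda>i. if i \<in> A then restrict f A i else d)" by auto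
    moreover have "restrict f A \<in> A \<rightarrow>\<^sub>E B" using f by auto
    ultimately show "f \<in> (\<lambda>g i. if i \<in> A then g i else d) ` (A \<rightarrow>\<^sub>E B)" by blast
  qed
  moreover have "finite (A \<rightarrow>\<^sub>E B)" using assms by (rule finite_PiE)
  moreover have "card ((\<lambda>g i. if i \<in> A then g i else d) ` (A \<rightarrow>\<^sub>E B)) \<le> card B ^ card A"
    using card_image_le[OF \<open>finite (A \<rightarrow>\<^sub>E B)\<close>] assms by (simp add: card_PiE)
  ultimately show ?thesis by (meson card_mono finite_imageI finite_subset order_trans)
qed


section \<open>The polynomial identity\<close>

locale vertex_blocks =
  fixes n V :: nat
  assumes V_pos: "0 < V"
begin

definition K :: nat where "K = (n + V - 1) div V"
definition D :: nat where "D = K * K - 1"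
definition colour :: "nat \<Rightarrow> nat \<Rightarrow> nat \<times> nat" where "colour b c = (b mod V, c mod V)"
definition expo :: "nat \<Rightarrow> nat \<Rightarrow> nat" where "expo b c = b div V * K + c div V"

definition nbrs :: "(nat \<Rightarrow> nat \<Rightarrow> bool) \<Rightarrow> nat \<Rightarrow> nat set" where
  "nbrs E x = {w. w < n \<and> E x w}"

definition alpha_poly :: "(nat \<Rightarrow> nat \<Rightarrow> bool) \<Rightarrow> nat \<times> nat \<Rightarrow> int poly" where
  "alpha_poly E j = (\<Sum>x<n. \<Sum>w\<in>nbrs E x. if colour x w = j then monom 1 (D - expo x w) else 0)"

definition beta_poly :: "(nat \<Rightarrow> nat \<Rightarrow> bool) \<Rightarrow> nat \<times> nat \<Rightarrow> int poly" where
  "beta_poly E j = (\<Sum>y<n. \<Sum>b\<in>nbrs E y. \<Sum>c\<in>nbrs E y. if colour b c = j then monom 1 (expo b c) else 0)"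

definition G :: "(nat \<Rightarrow> nat \<Rightarrow> bool) \<Rightarrow> int poly" where
  "G E = (\<Sum>j\<in>{..<V} \<times> {..<V}. alpha_poly E j * beta_poly E j)"

lemma finite_nbrs [simp]: "finite (nbrs E x)"
  unfolding nbrs_def by simp

lemma div_less_K:
  assumes "b < n"
  shows "b div V < K"
proof -
  have "K = (n - 1 + V) div V" unfolding K_def using assms by (simp add: algebra_simps)
  also have "\<dots> = (n - 1) div V + 1" using V_pos by simp
  moreover have "b div V \<le> (n - 1) div V" using assms by (intro div_le_mono) simp
  ultimately show ?thesis by simp
qed

lemma expo_le_D:
  assumes "b < n" "c < n"
  shows "expo b c \<le> D"
proof -
  have "expo b c < b div V * K + K" unfolding expo_def using div_less_K[OF assms(2)] by simp
  also have "\<dots> = (b div V + 1) * K" by simp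
  also have "\<dots> \<le> K * K" using div_less_K[OF assms(1)] by (intro mult_right_mono) simp_all
  finally show ?thesis unfolding D_def by simp
qed

lemma expo_inj:
  assumes "b < n" "c < n" "x < n" "w < n" "colour b c = colour x w" "expo b c = expo x w"
  shows "b = x \<and> c = w"
proof -
  have K: "c div V < K" "w div V < K" using div_less_K assms by simp_all
  have "b div V = expo b c div K" "x div V = expo x w div K"
    unfolding expo_def using K by simp_all
  hence "b div V = x div V" using assms(6) by simp
  moreover from this have "c div V = w div V" using assms(6) unfolding expo_def by simp
  ultimately show ?thesis using assms(5) unfolding colour_def by (metis div_mult_mod_eq prod.inject)
qed

lemma K_le: "K \<le> n"
proof -
  have "n \<le> n * V" using V_pos by simp
  hence "n + V - 1 < n * V + V" using V_pos by linarith
  also have "\<dots> = (n + 1) * V" by simp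
  finally have "n + V - 1 < (n + 1) * V" .
  hence "K < n + 1" unfolding K_def by (rule less_mult_imp_div_less)
  thus ?thesis by simp
qed

lemma D_le: "D \<le> n ^ 3"
proof -
  have "D \<le> n * n" unfolding D_def using mult_le_mono[OF K_le K_le] by linarith
  also have "\<dots> \<le> n ^ 3" by (cases n) (simp_all add: power3_eq_cube)
  finally show ?thesis .
qed

lemma colour_expo_eq_iff:
  assumes "b < n" "c < n" "x < n" "w < n"
  shows "colour b c = colour x w \<and> D - expo x w + expo b c = D \<longleftrightarrow> b = x \<and> c = w"
proof
  assume eq: "colour b c = colour x w \<and> D - expo x w + expo b c = D"
  hence "expo b c = expo x w" using expo_le_D[OF assms(3,4)] by linarith
  thus "b = x \<and> c = w" using expo_inj[OF assms] eq by blast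
qed (use expo_le_D[OF assms(3,4)] in simp)

lemma G_eq_sum_monom:
  "G E = (\<Sum>x<n. \<Sum>w\<in>nbrs E x. \<Sum>y<n. \<Sum>b\<in>nbrs E y. \<Sum>c\<in>nbrs E y.
     if colour b c = colour x w then monom 1 (D - expo x w + expo b c) else 0)"
proof -
  have colour_in: "colour x w \<in> {..<V} \<times> {..<V}" for x w
    unfolding colour_def using V_pos by simp
  have "G E = (\<Sum>j\<in>{..<V} \<times> {..<V}. \<Sum>x<n. \<Sum>w\<in>nbrs E x.
      if colour x w = j then monom 1 (D - expo x w) * beta_poly E j else 0)"
    unfolding G_def alpha_poly_def by (simp add: sum_distrib_right if_distrib[of "\<lambda>q. q * _"] cong: if_cong)
  also have "\<dots> = (\<Sum>x<n. \<Sum>w\<in>nbrs E x. monom 1 (D - expo x w) * beta_poly E (colour x w))"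
    by (subst sum.swap, rule sum.cong[OF refl], subst sum.swap) (simp add: colour_in)
  also have "\<dots> = (\<Sum>x<n. \<Sum>w\<in>nbrs E x. \<Sum>y<n. \<Sum>b\<in>nbrs E y. \<Sum>c\<in>nbrs E y.
     if colour b c = colour x w then monom 1 (D - expo x w + expo b c) else 0)"
    unfolding beta_poly_def by (simp add: sum_distrib_left mult_monom if_distrib[of "\<lambda>q. _ * q"] cong: if_cong)
  finally show ?thesis .
qed

lemma degree_G_le: "degree (G E) \<le> 2 * D"
proof -
  have "degree (if colour b c = colour x w then monom (1::int) (D - expo x w + expo b c) else 0) \<le> 2 * D"
    if "b \<in> nbrs E y" "c \<in> nbrs E y" for b c x w y
    using expo_le_D[of b c] that by (auto simp: nbrs_def degree_monom_eq)
  thus ?thesis unfolding G_eq_sum_monom by (intro degree_sum_le finite_nbrs finite_lessThan) blast+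
qed

lemma sum_nbrs: "(\<Sum>w\<in>nbrs E x. f w) = (\<Sum>w<n. if E x w then f w else 0)"
proof -
  have "nbrs E x = {w \<in> {..<n}. E x w}" unfolding nbrs_def by auto
  thus ?thesis by (simp only: sum.inter_filter[OF finite_lessThan])
qed

lemma coeff_G_D:
  assumes "simple_graph n E"
  shows "coeff (G E) D = 6 * int (triangle_count n E)"
proof -
  have sym: "E u w \<longleftrightarrow> E w u" for u w using assms unfolding simple_graph_def by blast
  have inner: "(\<Sum>b\<in>nbrs E y. \<Sum>c\<in>nbrs E y.
      if colour b c = colour x w \<and> D - expo x w + expo b c = D then 1 else 0)
      = (if E x y \<and> E y w then 1 else (0::int))" if "x < n" "w < n" for x w y
  proof -
    have "(\<Sum>b\<in>nbrs E y. \<Sum>c\<in>nbrs E y.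
        if colour b c = colour x w \<and> D - expo x w + expo b c = D then 1 else (0::int))
        = (\<Sum>b\<in>nbrs E y. if b = x then (\<Sum>c\<in>nbrs E y. if c = w then 1 else 0) else 0)"
      using that by (intro sum.cong refl) (auto simp: colour_expo_eq_iff nbrs_def)
    also have "\<dots> = (if E x y \<and> E y w then 1 else 0)"
      using that sym[of y x] by (simp add: sum.delta nbrs_def)
    finally show ?thesis .
  qed
  have "coeff (G E) D = (\<Sum>x<n. \<Sum>w\<in>nbrs E x. \<Sum>y<n. \<Sum>b\<in>nbrs E y. \<Sum>c\<in>nbrs E y.
     if colour b c = colour x w \<and> D - expo x w + expo b c = D then 1 else 0)"
    unfolding G_eq_sum_monom by (simp add: coeff_sum if_distrib[of "\<lambda>q. coeff q D"] coeff_monom if_if_eq_conj cong: if_cong)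
  also have "\<dots> = (\<Sum>x<n. \<Sum>w<n. if E x w then (\<Sum>y<n. \<Sum>b\<in>nbrs E y. \<Sum>c\<in>nbrs E y.
     if colour b c = colour x w \<and> D - expo x w + expo b c = D then 1 else 0) else 0)"
    by (simp only: sum_nbrs)
  also have "\<dots> = (\<Sum>x<n. \<Sum>w<n. \<Sum>y<n. if E x w \<and> E x y \<and> E y w then 1 else 0)"
  proof (intro sum.cong refl)
    fix x w assume "x \<in> {..<n}" "w \<in> {..<n}"
    thus "(if E x w then (\<Sum>y<n. \<Sum>b\<in>nbrs E y. \<Sum>c\<in>nbrs E y.
        if colour b c = colour x w \<and> D - expo x w + expo b c = D then 1 else 0) else 0)
      = (\<Sum>y<n. if E x w \<and> E x y \<and> E y w then 1 else (0::int))"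
      by (cases "E x w") (simp_all add: inner)
  qed
  also have "\<dots> = (\<Sum>x<n. \<Sum>y<n. \<Sum>w<n. if E x y \<and> E y w \<and> E x w then 1 else 0)"
    by (rule sum.cong[OF refl], subst sum.swap) (simp add: conj_ac)
  also have "\<dots> = int (card {(a, b, c). a < n \<and> b < n \<and> c < n \<and> E a b \<and> E b c \<and> E a c})"
    unfolding card_triples_eq_sum by (simp add: if_distrib[of int] cong: if_cong)
  finally show ?thesis using card_ordered_triangles[OF assms] by simp
qed

end

section \<open>The verifier\<close>

record input_state =
  cur :: "nat option"
  row_acc :: "nat \<Rightarrow> int"
  col_acc :: "nat \<Rightarrow> int"
  alpha_acc :: "nat \<times> nat \<Rightarrow> int"
  beta_acc :: "nat \<times> nat \<Rightarrow> int"

locale triangle_protocol = vertex_blocks +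
  fixes p :: int and w :: nat
  assumes p_prime: "prime p" and p_large: "6 * int n ^ 3 < p" and p_le: "p \<le> 2 ^ w"
begin

lemma p_pos: "0 < p"
  using prime_gt_0_int[OF p_prime] .

definition bump :: "('a \<Rightarrow> int) \<Rightarrow> 'a \<Rightarrow> int \<Rightarrow> 'a \<Rightarrow> int" where
  "bump f i a = f(i := (f i + a) mod p)"

definition flush :: "(nat \<Rightarrow> int) \<Rightarrow> (nat \<Rightarrow> int) \<Rightarrow> (nat \<times> nat \<Rightarrow> int) \<Rightarrow> nat \<times> nat \<Rightarrow> int" where
  "flush P Q B j = (B j + P (fst j) * Q (snd j)) mod p"

text \<open>When the list of a new vertex begins, the finished vertex adds the product of its row and
  column sums to the \<open>B\<^sub>j(r)\<close> accumulators; \<open>beta_value\<close> below includes the pending one.\<close>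
definition enter :: "nat \<Rightarrow> input_state \<Rightarrow> input_state" where
  "enter x s = (if cur s = Some x then s
     else s\<lparr>cur := Some x, row_acc := \<lambda>_. 0, col_acc := \<lambda>_. 0,
            beta_acc := flush (row_acc s) (col_acc s) (beta_acc s)\<rparr>)"

definition absorb :: "int \<Rightarrow> nat \<Rightarrow> nat \<Rightarrow> input_state \<Rightarrow> input_state" where
  "absorb r x c s = s\<lparr>row_acc := bump (row_acc s) (c mod V) (r ^ (c div V * K)),
     col_acc := bump (col_acc s) (c mod V) (r ^ (c div V)),
     alpha_acc := bump (alpha_acc s) (colour x c) (r ^ (D - expo x c))\<rparr>"

text \<open>Tokens naming a vertex outside \<open>[n]\<close> never occur in an adjacency stream; they are ignored.\<close>
definition input_step :: "int \<Rightarrow> input_state \<Rightarrow> nat \<times> nat \<Rightarrow> input_state" where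
  "input_step r s t = (if fst t < n \<and> snd t < n then absorb r (fst t) (snd t) (enter (fst t) s) else s)"

definition beta_value :: "input_state \<Rightarrow> nat \<times> nat \<Rightarrow> int" where
  "beta_value s j = beta_acc s j + row_acc s (fst j) * col_acc s (snd j)"

definition row_sum :: "int \<Rightarrow> nat set \<Rightarrow> nat \<Rightarrow> int" where
  "row_sum r B i = (\<Sum>b\<in>B. if b mod V = i then r ^ (b div V * K) else 0)"

definition col_sum :: "int \<Rightarrow> nat set \<Rightarrow> nat \<Rightarrow> int" where
  "col_sum r B i = (\<Sum>c\<in>B. if c mod V = i then r ^ (c div V) else 0)"

definition alpha_sum :: "int \<Rightarrow> nat \<Rightarrow> nat set \<Rightarrow> nat \<times> nat \<Rightarrow> int" where
  "alpha_sum r x B j = (\<Sum>c\<in>B. if colour x c = j then r ^ (D - expo x c) else 0)"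

lemma bump_add_sum:
  assumes "finite B" "c \<notin> B"
  shows "[bump f (g c) (h c) i + (\<Sum>b\<in>B. if g b = i then h b else 0)
    = f i + (\<Sum>b\<in>insert c B. if g b = i then h b else 0)] (mod p)"
  using assms unfolding bump_def by (auto simp: cong_def mod_add_left_eq add_ac)

lemma foldl_bump:
  assumes "distinct l"
  shows "[foldl (\<lambda>f c. bump f (g c) (h c)) f l i = f i + (\<Sum>b\<in>set l. if g b = i then h b else 0)] (mod p)"
  using assms
proof (induction l arbitrary: f)
  case (Cons c l)
  have "[foldl (\<lambda>f c. bump f (g c) (h c)) (bump f (g c) (h c)) l i
      = bump f (g c) (h c) i + (\<Sum>b\<in>set l. if g b = i then h b else 0)] (mod p)"
    using Cons by simp
  also have "[bump f (g c) (h c) i + (\<Sum>b\<in>set l. if g b = i then h b else 0)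
      = f i + (\<Sum>b\<in>insert c (set l). if g b = i then h b else 0)] (mod p)"
    using Cons.prems by (intro bump_add_sum) simp_all
  finally show ?case by simp
qed simp

lemma foldl_absorb:
  "foldl (\<lambda>s c. absorb r x c s) s l = s\<lparr>
     row_acc := foldl (\<lambda>f c. bump f (c mod V) (r ^ (c div V * K))) (row_acc s) l,
     col_acc := foldl (\<lambda>f c. bump f (c mod V) (r ^ (c div V))) (col_acc s) l,
     alpha_acc := foldl (\<lambda>f c. bump f (colour x c) (r ^ (D - expo x c))) (alpha_acc s) l\<rparr>"
  by (induction l arbitrary: s) (simp_all add: absorb_def)

lemma cur_absorb [simp]: "cur (absorb r x c s) = cur s"
  by (simp add: absorb_def)

lemma cur_enter [simp]: "cur (enter x s) = Some x"
  by (simp add: enter_def)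

lemma enter_cur: "cur s = Some x \<Longrightarrow> enter x s = s"
  by (simp add: enter_def)

lemma foldl_input_step_block:
  fixes r :: int
  assumes "x < n" "set l \<subseteq> {..<n}"
  shows "foldl (input_step r) s (map (Pair x) l)
    = (if l = [] then s else foldl (\<lambda>s c. absorb r x c s) (enter x s) l)"
  using assms(2)
proof (induction l arbitrary: s)
  case (Cons c l)
  have "input_step r s (x, c) = absorb r x c (enter x s)"
    using Cons.prems assms(1) by (simp add: input_step_def)
  moreover have "enter x (absorb r x c (enter x s)) = absorb r x c (enter x s)"
    by (simp add: enter_cur)
  ultimately show ?case using Cons by simp
qed simp

lemma block_effect:
  fixes r :: int
  assumes "x < n" "set l \<subseteq> {..<n}" "distinct l" "l \<noteq> []" "cur s \<noteq> Some x"
  defines "s' \<equiv> foldl (input_step r) s (map (Pair x) l)"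
  shows "cur s' = Some x"
    and "[alpha_acc s' j = alpha_acc s j + alpha_sum r x (set l) j] (mod p)"
    and "[beta_value s' j = beta_value s j + row_sum r (set l) (fst j) * col_sum r (set l) (snd j)] (mod p)"
proof -
  define P where "P = foldl (\<lambda>f c. bump f (c mod V) (r ^ (c div V * K))) (\<lambda>_. 0) l"
  define Q where "Q = foldl (\<lambda>f c. bump f (c mod V) (r ^ (c div V))) (\<lambda>_. 0) l"
  define A where "A = foldl (\<lambda>f c. bump f (colour x c) (r ^ (D - expo x c))) (alpha_acc s) l"
  have s': "s' = (enter x s)\<lparr>row_acc := P, col_acc := Q, alpha_acc := A\<rparr>"
    unfolding s'_def foldl_input_step_block[OF assms(1,2)] foldl_absorb P_def Q_def A_def
    using assms(4,5) by (simp add: enter_def)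
  have P: "[P i = row_sum r (set l) i] (mod p)" for i
    using foldl_bump[OF assms(3), where g = "\<lambda>b. b mod V" and h = "\<lambda>b. r ^ (b div V * K)" and f = "\<lambda>_. 0"]
    unfolding P_def row_sum_def by simp
  have Q: "[Q i = col_sum r (set l) i] (mod p)" for i
    using foldl_bump[OF assms(3), where g = "\<lambda>b. b mod V" and h = "\<lambda>b. r ^ (b div V)" and f = "\<lambda>_. 0"]
    unfolding Q_def col_sum_def by simp
  have A: "[A j = alpha_acc s j + alpha_sum r x (set l) j] (mod p)"
    unfolding A_def alpha_sum_def by (rule foldl_bump[OF assms(3)])
  show "cur s' = Some x" using assms(5) by (simp add: s' enter_def)
  show "[alpha_acc s' j = alpha_acc s j + alpha_sum r x (set l) j] (mod p)" using A by (simp add: s')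
  have "[beta_value s' j = flush (row_acc s) (col_acc s) (beta_acc s) j + P (fst j) * Q (snd j)] (mod p)"
    using assms(5) by (simp add: s' beta_value_def enter_def)
  also have "[flush (row_acc s) (col_acc s) (beta_acc s) j + P (fst j) * Q (snd j)
      = beta_value s j + row_sum r (set l) (fst j) * col_sum r (set l) (snd j)] (mod p)"
    unfolding flush_def beta_value_def by (intro cong_add cong_mult P Q) simp
  finally show "[beta_value s' j = beta_value s j + row_sum r (set l) (fst j) * col_sum r (set l) (snd j)] (mod p)" .
qed

lemma blocks_effect:
  fixes r :: int
  assumes "distinct (map fst bs)" "\<forall>(x, l) \<in> set bs. x < n \<and> set l \<subseteq> {..<n} \<and> distinct l"
    and "cur s \<notin> Some ` fst ` set bs"
  defines "s' \<equiv> foldl (input_step r) s (concat (map (\<lambda>(x, l). map (Pair x) l) bs))"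
  shows "[alpha_acc s' j = alpha_acc s j + (\<Sum>(x, l)\<leftarrow>bs. alpha_sum r x (set l) j)] (mod p)
    \<and> [beta_value s' j = beta_value s j
        + (\<Sum>(x, l)\<leftarrow>bs. row_sum r (set l) (fst j) * col_sum r (set l) (snd j))] (mod p)"
  using assms(1-3) unfolding s'_def
proof (induction bs arbitrary: s)
  case Nil
  then show ?case by simp
next
  case (Cons b bs)
  obtain x l where b: "b = (x, l)" by (cases b)
  show ?case
  proof (cases "l = []")
    case True
    then show ?thesis using Cons by (simp add: b alpha_sum_def row_sum_def)
  next
    case False
    define t where "t = foldl (input_step r) s (map (Pair x) l)"
    have x: "x < n" "set l \<subseteq> {..<n}" "distinct l" "cur s \<noteq> Some x"
      using Cons.prems by (auto simp: b)
    have "cur t \<notin> Some ` fst ` set bs"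
      using block_effect(1)[OF x(1-3) False x(4)] Cons.prems(1) by (auto simp: t_def b)
    hence IH: "[alpha_acc (foldl (input_step r) t (concat (map (\<lambda>(x, l). map (Pair x) l) bs))) j
        = alpha_acc t j + (\<Sum>(x, l)\<leftarrow>bs. alpha_sum r x (set l) j)] (mod p)
      \<and> [beta_value (foldl (input_step r) t (concat (map (\<lambda>(x, l). map (Pair x) l) bs))) j
        = beta_value t j + (\<Sum>(x, l)\<leftarrow>bs. row_sum r (set l) (fst j) * col_sum r (set l) (snd j))] (mod p)"
      using Cons by simp
    have "[alpha_acc t j = alpha_acc s j + alpha_sum r x (set l) j] (mod p)"
      "[beta_value t j = beta_value s j + row_sum r (set l) (fst j) * col_sum r (set l) (snd j)] (mod p)"
      unfolding t_def by (rule block_effect[OF x(1-3) False x(4)])+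
    from cong_trans[OF conjunct1[OF IH] cong_add[OF this(1) cong_refl]]
      cong_trans[OF conjunct2[OF IH] cong_add[OF this(2) cong_refl]]
    show ?thesis by (simp add: b t_def add_ac)
  qed
qed

definition input_init :: input_state where
  "input_init = \<lparr>cur = None, row_acc = \<lambda>_. 0, col_acc = \<lambda>_. 0, alpha_acc = \<lambda>_. 0, beta_acc = \<lambda>_. 0\<rparr>"

definition check_value :: "input_state \<Rightarrow> int" where
  "check_value s = (\<Sum>j\<in>{..<V} \<times> {..<V}. alpha_acc s j * beta_value s j) mod p"

lemma poly_alpha_poly: "poly (alpha_poly E j) r = (\<Sum>x<n. alpha_sum r x (nbrs E x) j)"
  unfolding alpha_poly_def alpha_sum_def
  by (simp add: poly_sum poly_monom if_distrib[of "\<lambda>q. poly q r"] cong: if_cong)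

lemma poly_beta_poly:
  "poly (beta_poly E j) r = (\<Sum>y<n. row_sum r (nbrs E y) (fst j) * col_sum r (nbrs E y) (snd j))"
proof -
  have ifs: "(if A then a else 0) * (if B then b else 0) = (if A \<and> B then a * b else (0::int))" for A B a b
    by simp
  obtain j1 j2 where "j = (j1, j2)" by (cases j)
  thus ?thesis
    unfolding beta_poly_def row_sum_def col_sum_def
    by (simp add: poly_sum poly_monom if_distrib[of "\<lambda>q. poly q r"] sum_product colour_def expo_def
        power_add ifs cong: if_cong)
qed

lemma sum_list_blocks:
  assumes "distinct vs" "set vs = {..<n}" "length ls = length vs"
    and "\<And>i. i < length vs \<Longrightarrow> set (ls ! i) = nbrs E (vs ! i)"
  shows "(\<Sum>(x, l)\<leftarrow>zip vs ls. f x (set l)) = (\<Sum>x<n. f x (nbrs E x))"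
proof -
  have "(\<Sum>(x, l)\<leftarrow>zip vs ls. f x (set l)) = (\<Sum>(x, l)\<leftarrow>zip vs ls. f x (nbrs E x))"
    using assms(4) by (intro arg_cong[where f = sum_list] map_cong refl) (auto simp: in_set_zip)
  also have "\<dots> = (\<Sum>x\<leftarrow>vs. f x (nbrs E x))"
    using assms(3) by (induction vs ls rule: list_induct2') auto
  also have "\<dots> = (\<Sum>x<n. f x (nbrs E x))"
    using assms(1,2) by (simp add: sum_list_distinct_conv_sum_set)
  finally show ?thesis .
qed

lemma adj_stream_run:
  fixes r :: int
  assumes "simple_graph n E" "adj_stream n E \<sigma>"
  shows "[alpha_acc (foldl (input_step r) input_init \<sigma>) j = poly (alpha_poly E j) r] (mod p)"
    and "[beta_value (foldl (input_step r) input_init \<sigma>) j = poly (beta_poly E j) r] (mod p)"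
proof -
  obtain vs ls where vs: "distinct vs" "set vs = {..<n}" "length ls = length vs"
    and ls: "\<forall>i < length vs. distinct (ls ! i) \<and> set (ls ! i) = {w. E (vs ! i) w}"
    and \<sigma>: "\<sigma> = concat (map2 (\<lambda>v l. map (Pair v) l) vs ls)"
    using assms(2) unfolding adj_stream_def by blast
  have nbrs: "set (ls ! i) = nbrs E (vs ! i)" if "i < length vs" for i
    using ls that assms(1) unfolding simple_graph_def nbrs_def by auto
  have blocks: "\<forall>(x, l) \<in> set (zip vs ls). x < n \<and> set l \<subseteq> {..<n} \<and> distinct l"
  proof clarify
    fix x l assume "(x, l) \<in> set (zip vs ls)"
    then obtain i where i: "i < length vs" "x = vs ! i" "l = ls ! i" using vs(3) by (auto simp: in_set_zip)
    have "x \<in> set vs" using i by simp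
    thus "x < n \<and> set l \<subseteq> {..<n} \<and> distinct l"
      using vs(2) nbrs[OF i(1)] ls i by (auto simp: nbrs_def)
  qed
  have distinct: "distinct (map fst (zip vs ls))" using vs by simp
  have fresh: "cur input_init \<notin> Some ` fst ` set (zip vs ls)" by (simp add: input_init_def)
  note effect = blocks_effect[OF distinct blocks fresh, of r j, folded \<sigma>]
  have init: "alpha_acc input_init j = 0" "beta_value input_init j = 0"
    by (simp_all add: input_init_def beta_value_def)
  have "(\<Sum>(x, l)\<leftarrow>zip vs ls. alpha_sum r x (set l) j) = poly (alpha_poly E j) r"
    unfolding poly_alpha_poly by (rule sum_list_blocks[OF vs nbrs])
  with conjunct1[OF effect]
  show "[alpha_acc (foldl (input_step r) input_init \<sigma>) j = poly (alpha_poly E j) r] (mod p)"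
    using init by simp
  have "(\<Sum>(x, l)\<leftarrow>zip vs ls. row_sum r (set l) (fst j) * col_sum r (set l) (snd j)) = poly (beta_poly E j) r"
    unfolding poly_beta_poly by (rule sum_list_blocks[OF vs nbrs])
  with conjunct2[OF effect]
  show "[beta_value (foldl (input_step r) input_init \<sigma>) j = poly (beta_poly E j) r] (mod p)"
    using init by simp
qed

lemma check_value_adj_stream:
  assumes "simple_graph n E" "adj_stream n E \<sigma>"
  shows "check_value (foldl (input_step r) input_init \<sigma>) = poly (G E) r mod p"
proof -
  have "[check_value (foldl (input_step r) input_init \<sigma>) = poly (G E) r] (mod p)"
    unfolding check_value_def G_def poly_sum poly_mult
    using adj_stream_run[OF assms] by (intro cong_sum cong_mult cong_mod_leftI) simp_all
  thus ?thesis unfolding cong_def check_value_def by simp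
qed

definition help_length :: nat where "help_length = (2 * D + 1) * w"

text \<open>The help state counts the bits read and accumulates, modulo \<open>p\<close>, the claimed polynomial
  at \<open>r\<close> and its claimed coefficient of \<open>X\<^sup>D\<close>.\<close>
fun help_step :: "int \<Rightarrow> nat \<times> int \<times> int \<Rightarrow> bool \<Rightarrow> nat \<times> int \<times> int" where
  "help_step r (k, a, c) b =
     (if k < help_length then
       (k + 1, (a + (if b then 2 ^ (k mod w) * r ^ (k div w) else 0)) mod p,
        if k div w = D then (c + (if b then 2 ^ (k mod w) else 0)) mod p else c)
     else (help_length + 1, a, c))"

lemma w_pos: "0 < w"
  using p_le prime_gt_1_int[OF p_prime] by (cases w) auto

lemma fst_foldl_help_step: "fst (foldl (help_step r) (0, 0, 0) m) = min (length m) (help_length + 1)"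
proof (induction m rule: rev_induct)
  case (snoc b m)
  then show ?case by (cases "foldl (help_step r) (0, 0, 0) m") auto
qed simp

lemma snd_foldl_help_step:
  assumes "length m \<le> help_length"
  shows "snd (foldl (help_step r) (0, 0, 0) m)
    = ((\<Sum>k<length m. if m ! k then 2 ^ (k mod w) * r ^ (k div w) else 0) mod p,
       (\<Sum>k<length m. if m ! k \<and> k div w = D then 2 ^ (k mod w) else 0) mod p)"
  using assms
proof (induction m rule: rev_induct)
  case (snoc b m)
  obtain k a c where fold: "foldl (help_step r) (0, 0, 0) m = (k, a, c)"
    by (cases "foldl (help_step r) (0, 0, 0) m") auto
  moreover have "k = length m"
    using fst_foldl_help_step[of r m] snoc.prems fold by simp
  ultimately show ?case using snoc
    by (auto simp: nth_append mod_add_left_eq cong: if_cong)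
qed simp

fun verifier_input :: "int \<times> input_state \<times> nat \<times> int \<times> int \<Rightarrow> nat \<times> nat \<Rightarrow> int \<times> input_state \<times> nat \<times> int \<times> int" where
  "verifier_input (r, s, h) t = (r, input_step r s t, h)"

fun verifier_help :: "int \<times> input_state \<times> nat \<times> int \<times> int \<Rightarrow> bool \<Rightarrow> int \<times> input_state \<times> nat \<times> int \<times> int" where
  "verifier_help (r, s, h) b = (r, s, help_step r h b)"

fun verifier_output :: "int \<times> input_state \<times> nat \<times> int \<times> int \<Rightarrow> nat option" where
  "verifier_output (r, s, k, a, c) =
     (if k = help_length \<and> a = check_value s then Some (nat (c div 6)) else None)"

definition verifier_init :: "(int \<times> input_state \<times> nat \<times> int \<times> int) pmf" where
  "verifier_init = map_pmf (\<lambda>r. (r, input_init, 0, 0, 0)) (pmf_of_set {0..<p})"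

definition honest_help :: "(nat \<times> nat) list \<Rightarrow> bool list" where
  "honest_help \<sigma> = bit_blocks w (2 * D + 1) (\<lambda>i. coeff (G (stream_graph \<sigma>)) i mod p)"

lemma foldl_verifier_input: "foldl verifier_input (r, s, h) \<sigma> = (r, foldl (input_step r) s \<sigma>, h)"
  by (induction \<sigma> arbitrary: s) simp_all

lemma foldl_verifier_help: "foldl verifier_help (r, s, h) m = (r, s, foldl (help_step r) h m)"
  by (induction m arbitrary: h) simp_all

lemma verifier_outcome:
  assumes "simple_graph n E" "adj_stream n E \<sigma>"
  shows "verifier_output (foldl verifier_help (foldl verifier_input (r, input_init, 0, 0, 0) \<sigma>) m)
    = (if length m = help_length \<and> (\<Sum>i<2 * D + 1. block_value w m i * r ^ i) mod p = poly (G E) r mod p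
       then Some (nat (block_value w m D mod p div 6)) else None)"
proof (cases "length m = help_length")
  case True
  hence len: "length m = (2 * D + 1) * w" unfolding help_length_def .
  have "foldl (help_step r) (0, 0, 0) m
      = (help_length, (\<Sum>i<2 * D + 1. block_value w m i * r ^ i) mod p, block_value w m D mod p)"
    using fst_foldl_help_step[of r m] snd_foldl_help_step[of m r] True
      weighted_bit_sum_eq[OF len w_pos] bit_sum_block_eq[OF len w_pos, of D]
    by (cases "foldl (help_step r) (0, 0, 0) m") simp
  thus ?thesis
    using True check_value_adj_stream[OF assms]
    by (simp add: foldl_verifier_input foldl_verifier_help)
next
  case False
  hence "fst (foldl (help_step r) (0, 0, 0) m) \<noteq> help_length"
    using fst_foldl_help_step[of r m] by simp
  thus ?thesis using False
    by (cases "foldl (help_step r) (0, 0, 0) m") (simp add: foldl_verifier_input foldl_verifier_help)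
qed

lemma six_triangle_count_less_p: "6 * int (triangle_count n E) < p"
proof -
  have "triangle_count n E \<le> card ({..<n} \<times> {..<n} \<times> {..<n})"
    unfolding triangle_count_def by (intro card_mono) auto
  hence "triangle_count n E \<le> n ^ 3" by (simp add: power3_eq_cube)
  hence "int (triangle_count n E) \<le> int n ^ 3" by (metis of_nat_le_iff of_nat_power)
  thus ?thesis using p_large by linarith
qed

lemma honest_help_accepted:
  assumes "simple_graph n E" "adj_stream n E \<sigma>" "r \<in> {0..<p}"
  shows "verifier_output (foldl verifier_help (foldl verifier_input (r, input_init, 0, 0, 0) \<sigma>) (honest_help \<sigma>))
    = Some (triangle_count n E)"
proof -
  have "stream_graph \<sigma> = E" by (rule stream_graph_adj_stream[OF assms(1,2)])
  have bv: "block_value w (honest_help \<sigma>) i = coeff (G E) i mod p" if "i < 2 * D + 1" for i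
    unfolding honest_help_def block_value_bit_blocks[OF that] \<open>stream_graph \<sigma> = E\<close>
    using p_le p_pos by (simp add: pos_mod_bound[THEN order.strict_trans2])
  have "poly (G E) r = (\<Sum>i<2 * D + 1. coeff (G E) i * r ^ i)"
    using degree_G_le[of E] by (intro poly_eq_sum_lessThan) simp
  moreover have "[(\<Sum>i<2 * D + 1. block_value w (honest_help \<sigma>) i * r ^ i)
      = (\<Sum>i<2 * D + 1. coeff (G E) i * r ^ i)] (mod p)"
    by (intro cong_sum cong_mult) (simp_all add: bv)
  ultimately have "[(\<Sum>i<2 * D + 1. block_value w (honest_help \<sigma>) i * r ^ i) = poly (G E) r] (mod p)"
    by simp
  moreover have "block_value w (honest_help \<sigma>) D mod p = 6 * int (triangle_count n E)"
    using bv[of D] coeff_G_D[OF assms(1)] six_triangle_count_less_p by simp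
  ultimately show ?thesis
    unfolding verifier_outcome[OF assms(1,2)] by (simp add: cong_def honest_help_def help_length_def)
qed

lemma six_D_less_p: "6 * int D < p"
proof -
  have "int D \<le> int n ^ 3" using D_le by (metis of_nat_le_iff of_nat_power)
  thus ?thesis using p_large by linarith
qed

lemma card_cheating_seeds_le:
  assumes "simple_graph n E" "adj_stream n E \<sigma>"
  shows "card {r \<in> {0..<p}. verifier_output (foldl verifier_help (foldl verifier_input (r, input_init, 0, 0, 0) \<sigma>) m)
    \<notin> {Some (triangle_count n E), None}} \<le> 2 * D"
    (is "card ?bad \<le> _")
proof (cases "length m = help_length")
  case False
  then show ?thesis unfolding verifier_outcome[OF assms] by simp
next
  case True
  define H where "H = (\<Sum>i<2 * D + 1. monom (block_value w m i) i)"
  have poly_H: "poly H r = (\<Sum>i<2 * D + 1. block_value w m i * r ^ i)" for r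
    unfolding H_def by (simp add: poly_sum poly_monom)
  have coeff_D: "coeff (H - G E) D = block_value w m D - 6 * int (triangle_count n E)"
    unfolding H_def using coeff_G_D[OF assms(1)] by (simp add: coeff_diff coeff_sum coeff_monom)
  show ?thesis
  proof (cases "p dvd coeff (H - G E) D")
    case True
    hence "[block_value w m D = 6 * int (triangle_count n E)] (mod p)"
      unfolding coeff_D by (simp add: cong_iff_dvd_diff)
    hence "block_value w m D mod p = 6 * int (triangle_count n E)"
      using six_triangle_count_less_p by (simp add: cong_def)
    hence "?bad = {}" unfolding verifier_outcome[OF assms] by auto
    then show ?thesis by (metis card.empty zero_le)
  next
    case False
    have "?bad \<subseteq> {r \<in> {0..<p}. [poly H r = poly (G E) r] (mod p)}"
      unfolding verifier_outcome[OF assms] poly_H cong_def by (auto split: if_splits)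
    moreover have "finite {r \<in> {0..<p}. [poly H r = poly (G E) r] (mod p)}"
      by (rule finite_subset[of _ "{0..<p}"]) auto
    ultimately have "card ?bad \<le> card {r \<in> {0..<p}. [poly H r = poly (G E) r] (mod p)}"
      by (intro card_mono)
    also have "\<dots> \<le> max (degree H) (degree (G E))"
      using card_cong_poly_le_degree[OF p_prime False] .
    also have "\<dots> \<le> 2 * D"
    proof -
      have "degree H \<le> 2 * D"
        unfolding H_def by (intro degree_sum_le) (auto intro: order.trans[OF degree_monom_le])
      thus ?thesis using degree_G_le[of E] by simp
    qed
    finally show ?thesis .
  qed
qed

lemma verifier_sound:
  assumes "simple_graph n E" "adj_stream n E \<sigma>"
  shows "measure_pmf.prob verifier_init
    {s. verifier_output (foldl verifier_help (foldl verifier_input s \<sigma>) m) \<notin> {Some (triangle_count n E), None}}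
    \<le> 1 / 3"
proof -
  have "measure_pmf.prob verifier_init
      {s. verifier_output (foldl verifier_help (foldl verifier_input s \<sigma>) m) \<notin> {Some (triangle_count n E), None}}
    = card {r \<in> {0..<p}. verifier_output (foldl verifier_help (foldl verifier_input (r, input_init, 0, 0, 0) \<sigma>) m)
        \<notin> {Some (triangle_count n E), None}} / card {0..<p}"
    unfolding verifier_init_def measure_map_pmf using p_pos
    by (subst measure_pmf_of_set) (auto simp: vimage_def Int_def)
  also have "\<dots> \<le> (2 * D) / p"
    using card_cheating_seeds_le[OF assms, of m] p_pos by (intro frac_le) auto
  also have "\<dots> \<le> 1 / 3" using six_D_less_p p_pos by (simp add: field_simps)
  finally show ?thesis .
qed

definition funs_below :: "'a set \<Rightarrow> ('a \<Rightarrow> int) set" where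
  "funs_below A = {f. \<forall>i. (i \<in> A \<longrightarrow> f i \<in> {0..<p}) \<and> (i \<notin> A \<longrightarrow> f i = 0)}"

definition input_states :: "input_state set" where
  "input_states = {s. cur s \<in> insert None (Some ` {..<n}) \<and> row_acc s \<in> funs_below {..<V}
     \<and> col_acc s \<in> funs_below {..<V} \<and> alpha_acc s \<in> funs_below ({..<V} \<times> {..<V})
     \<and> beta_acc s \<in> funs_below ({..<V} \<times> {..<V})}"

definition verifier_states :: "(int \<times> input_state \<times> nat \<times> int \<times> int) set" where
  "verifier_states = {0..<p} \<times> input_states \<times> {..help_length + 1} \<times> {0..<p} \<times> {0..<p}"

definition space_bits :: nat where "space_bits = w * (2 * V ^ 2 + 2 * V + 6)"

lemma finite_card_funs_below:
  assumes "finite A"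
  shows "finite (funs_below A) \<and> card (funs_below A) \<le> nat p ^ card A"
  using card_funs_with_default_le[OF assms, of "{0..<p}" 0] unfolding funs_below_def by simp

lemma bump_funs_below: "f \<in> funs_below A \<Longrightarrow> i \<in> A \<Longrightarrow> bump f i a \<in> funs_below A"
  unfolding funs_below_def bump_def using p_pos by auto

lemma flush_funs_below:
  assumes "P \<in> funs_below {..<V}" "Q \<in> funs_below {..<V}" "B \<in> funs_below ({..<V} \<times> {..<V})"
  shows "flush P Q B \<in> funs_below ({..<V} \<times> {..<V})"
  using assms p_pos unfolding funs_below_def flush_def by auto

lemma zero_funs_below: "(\<lambda>_. 0) \<in> funs_below A"
  using p_pos by (simp add: funs_below_def)

lemma enter_closed: "s \<in> input_states \<Longrightarrow> x < n \<Longrightarrow> enter x s \<in> input_states"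
  unfolding input_states_def enter_def by (auto intro: flush_funs_below zero_funs_below)

lemma absorb_closed: "s \<in> input_states \<Longrightarrow> absorb r x c s \<in> input_states"
  unfolding input_states_def absorb_def colour_def using V_pos by (auto intro!: bump_funs_below)

lemma input_step_closed: "s \<in> input_states \<Longrightarrow> input_step r s t \<in> input_states"
  by (simp add: input_step_def absorb_closed enter_closed)

lemma help_step_closed:
  "h \<in> {..help_length + 1} \<times> {0..<p} \<times> {0..<p} \<Longrightarrow> help_step r h b \<in> {..help_length + 1} \<times> {0..<p} \<times> {0..<p}"
  using p_pos by (cases h) auto

lemma card_input_states_le: "finite input_states \<and> card input_states \<le> (n + 1) * nat p ^ (2 * V ^ 2 + 2 * V)"
proof -
  define C where "C = insert None (Some ` {..<n}) \<times> funs_below {..<V} \<times> funs_below {..<V}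
    \<times> funs_below ({..<V} \<times> {..<V}) \<times> funs_below ({..<V} \<times> {..<V})"
  have "input_states \<subseteq> (\<lambda>(c, P, Q, A, B). \<lparr>cur = c, row_acc = P, col_acc = Q, alpha_acc = A, beta_acc = B\<rparr>) ` C"
  proof
    fix s assume "s \<in> input_states"
    thus "s \<in> (\<lambda>(c, P, Q, A, B). \<lparr>cur = c, row_acc = P, col_acc = Q, alpha_acc = A, beta_acc = B\<rparr>) ` C"
      unfolding input_states_def C_def
      by (intro image_eqI[where x = "(cur s, row_acc s, col_acc s, alpha_acc s, beta_acc s)"]) auto
  qed
  moreover have "finite C \<and> card C \<le> (n + 1) * (nat p ^ V * (nat p ^ V * (nat p ^ V\<^sup>2 * nat p ^ V\<^sup>2)))"
  proof -
    have FV: "finite (funs_below {..<V})" "card (funs_below {..<V}) \<le> nat p ^ V"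
      using finite_card_funs_below[of "{..<V}"] by simp_all
    have FJ: "finite (funs_below ({..<V} \<times> {..<V}))" "card (funs_below ({..<V} \<times> {..<V})) \<le> nat p ^ V\<^sup>2"
      using finite_card_funs_below[of "{..<V} \<times> {..<V}"] by (simp_all add: power2_eq_square)
    have "card C = (n + 1) * (card (funs_below {..<V}) * (card (funs_below {..<V})
        * (card (funs_below ({..<V} \<times> {..<V})) * card (funs_below ({..<V} \<times> {..<V})))))"
      unfolding C_def by (simp add: card_cartesian_product card_image)
    also have "\<dots> \<le> (n + 1) * (nat p ^ V * (nat p ^ V * (nat p ^ V\<^sup>2 * nat p ^ V\<^sup>2)))"
      using FV FJ by (intro mult_le_mono le_refl)
    finally show ?thesis unfolding C_def using FV FJ by simp
  qed
  moreover have "nat p ^ V * (nat p ^ V * (nat p ^ V\<^sup>2 * nat p ^ V\<^sup>2)) = nat p ^ (2 * V\<^sup>2 + 2 * V)"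
    by (simp add: power_add[symmetric] mult_2 add_ac)
  ultimately show ?thesis
    by (metis (no_types, lifting) card_image_le card_mono finite_imageI finite_subset order_trans)
qed

lemma card_verifier_states_le: "finite verifier_states \<and> card verifier_states \<le> 2 ^ space_bits"
proof -
  define P where "P = nat p"
  have "n \<le> n ^ 3" by (cases n) (simp_all add: power3_eq_cube)
  hence "int n \<le> int n ^ 3" by (metis of_nat_le_iff of_nat_power)
  hence n: "n + 1 \<le> P" unfolding P_def using p_large by linarith
  have "int (2 * D + 2) \<le> p"
  proof (cases "D = 0")
    case False
    hence "1 \<le> int D" by simp
    thus ?thesis using six_D_less_p by simp
  qed (use prime_ge_2_int[OF p_prime] in simp)
  hence D: "2 * D + 2 \<le> P" unfolding P_def using p_pos by (simp add: le_nat_iff)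
  have P: "P \<le> 2 ^ w" unfolding P_def using p_le by (metis nat_le_iff of_nat_numeral of_nat_power)
  have "help_length + 2 \<le> (2 * D + 2) * (w + 1)" unfolding help_length_def by (simp add: algebra_simps)
  also have "\<dots> \<le> P * 2 ^ w" using D Suc_leI[OF less_exp[of w]] by (intro mult_le_mono) simp_all
  finally have L: "help_length + 2 \<le> P * 2 ^ w" .
  have "card verifier_states = P * (card input_states * ((help_length + 2) * (P * P)))"
    unfolding verifier_states_def P_def by (simp add: card_cartesian_product)
  also have "\<dots> \<le> P * (((n + 1) * P ^ (2 * V ^ 2 + 2 * V)) * ((P * 2 ^ w) * (P * P)))"
    using card_input_states_le L unfolding P_def by (intro mult_le_mono) simp_all
  also have "\<dots> \<le> P * ((P * P ^ (2 * V ^ 2 + 2 * V)) * ((P * 2 ^ w) * (P * P)))"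
    using n by (intro mult_le_mono) simp_all
  also have "\<dots> = P ^ (2 * V ^ 2 + 2 * V + 5) * 2 ^ w"
    by (simp add: power_add algebra_simps numeral_eq_Suc)
  also have "\<dots> \<le> (2 ^ w) ^ (2 * V ^ 2 + 2 * V + 5) * 2 ^ w"
    using P by (intro mult_le_mono power_mono) simp_all
  also have "\<dots> = 2 ^ space_bits"
    unfolding space_bits_def by (simp add: power_mult[symmetric] power_add[symmetric] algebra_simps)
  finally show ?thesis
    using card_input_states_le unfolding verifier_states_def by simp
qed

lemma tc_scheme_exists: "\<exists>init stepI stepH out. tc_scheme n help_length space_bits init stepI stepH out honest_help"
proof (rule tc_scheme_of_finite_state_verifier)
  show "finite verifier_states" "card verifier_states \<le> 2 ^ space_bits"
    using card_verifier_states_le by simp_all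
  show "set_pmf verifier_init \<subseteq> verifier_states"
    unfolding verifier_init_def verifier_states_def input_states_def input_init_def funs_below_def
    using p_pos by auto
  show "verifier_input s t \<in> verifier_states" if "s \<in> verifier_states" for s t
    using that input_step_closed unfolding verifier_states_def by (cases s) auto
  show "verifier_help s b \<in> verifier_states" if "s \<in> verifier_states" for s b
    using that help_step_closed unfolding verifier_states_def by (cases s) auto
  show "length (honest_help \<sigma>) \<le> help_length" for \<sigma>
    by (simp add: honest_help_def help_length_def)
  show "verifier_output (foldl verifier_help (foldl verifier_input s \<sigma>) (honest_help \<sigma>)) = Some (triangle_count n E)"
    if "simple_graph n E" "adj_stream n E \<sigma>" "s \<in> set_pmf verifier_init" for E \<sigma> s
    using that honest_help_accepted p_pos by (auto simp: verifier_init_def)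
  show "measure_pmf.prob verifier_init {s. verifier_output (foldl verifier_help (foldl verifier_input s \<sigma>) m)
      \<notin> {Some (triangle_count n E), None}} \<le> 1 / 3"
    if "simple_graph n E" "adj_stream n E \<sigma>" for E \<sigma> m
    by (rule verifier_sound[OF that])
qed

lemma help_length_le:
  assumes "0 < n"
  shows "help_length \<le> 2 * K\<^sup>2 * w"
proof -
  have "V \<le> n + V - 1" using assms by simp
  hence "0 < K" unfolding K_def using V_pos by (simp add: div_greater_zero_iff)
  hence "0 < K * K" by simp
  hence "2 * D + 1 \<le> 2 * K\<^sup>2" unfolding D_def power2_eq_square by linarith
  thus ?thesis unfolding help_length_def by (rule mult_right_mono) simp
qed

lemma space_bits_le: "space_bits \<le> 10 * V\<^sup>2 * w"
proof -
  have "V \<le> V\<^sup>2" "1 \<le> V\<^sup>2" using V_pos by (simp_all add: power2_eq_square Suc_le_eq)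
  hence "2 * V\<^sup>2 + 2 * V + 6 \<le> 10 * V\<^sup>2" by linarith
  thus ?thesis unfolding space_bits_def by (metis mult.commute mult_le_mono2)
qed

lemma scheme_size_bounds:
  fixes h v :: real
  assumes "0 < n" "real (K\<^sup>2) \<le> 16 * h" "real (V\<^sup>2) \<le> v" "real w \<le> 10 * (1 + log 2 (real n))"
  shows "real help_length \<le> 320 * h * (1 + log 2 (real n))"
    and "real space_bits \<le> 320 * v * (1 + log 2 (real n))"
proof -
  have "0 \<le> h" "0 \<le> v" using assms(2,3) of_nat_0_le_iff[of "K\<^sup>2"] of_nat_0_le_iff[of "V\<^sup>2"] by linarith+
  have "real help_length \<le> 2 * real (K\<^sup>2) * real w"
    using help_length_le[OF assms(1)] by (metis of_nat_le_iff of_nat_mult of_nat_numeral)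
  also have "\<dots> \<le> 2 * (16 * h) * (10 * (1 + log 2 (real n)))"
    using assms(2,4) \<open>0 \<le> h\<close> by (intro mult_mono) simp_all
  finally show "real help_length \<le> 320 * h * (1 + log 2 (real n))" by (simp add: algebra_simps)
  have "real space_bits \<le> 10 * real (V\<^sup>2) * real w"
    using space_bits_le by (metis of_nat_le_iff of_nat_mult of_nat_numeral)
  also have "\<dots> \<le> 10 * v * (10 * (1 + log 2 (real n)))"
    using assms(3,4) \<open>0 \<le> v\<close> by (intro mult_mono) simp_all
  also have "\<dots> = 100 * (v * (1 + log 2 (real n)))" by simp
  also have "\<dots> \<le> 320 * v * (1 + log 2 (real n))"
    using assms(1) \<open>0 \<le> v\<close> by simp
  finally show "real space_bits \<le> 320 * v * (1 + log 2 (real n))" .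
qed

end

section \<open>Choice of parameters\<close>

lemma exists_block_width:
  fixes n :: nat and h v :: real
  assumes n: "1 \<le> n" and h: "1 \<le> h" and v: "1 \<le> v" and hv: "real n ^ 2 \<le> h * v"
  shows "\<exists>V. 0 < V \<and> real (V\<^sup>2) \<le> v \<and> real (((n + V - 1) div V)\<^sup>2) \<le> 16 * h"
proof -
  define V where "V = min n (nat \<lfloor>sqrt v\<rfloor>)"
  define K where "K = (n + V - 1) div V"
  have sqrt_v: "1 \<le> sqrt v" using v by simp
  have V_pos: "0 < V" unfolding V_def using n sqrt_v by simp
  have "real V \<le> sqrt v" unfolding V_def using sqrt_v by linarith
  hence "real V ^ 2 \<le> sqrt v ^ 2" by (intro power_mono) simp_all
  hence V2: "real (V\<^sup>2) \<le> v" using v by simp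
  have "K * V \<le> n + V - 1" unfolding K_def by (rule div_times_less_eq_dividend)
  also have "\<dots> < 2 * n" using n unfolding V_def by linarith
  finally have "K * V \<le> 2 * n" by simp
  hence KV: "real K * real V \<le> 2 * real n" by (metis of_nat_le_iff of_nat_mult of_nat_numeral)
  have "real K ^ 2 \<le> 16 * h"
  proof (cases "n \<le> nat \<lfloor>sqrt v\<rfloor>")
    case True
    hence "V = n" unfolding V_def by simp
    hence "K = 1" unfolding K_def using n by (intro div_nat_eqI) simp_all
    thus ?thesis using h by simp
  next
    case False
    hence "real V = real_of_int \<lfloor>sqrt v\<rfloor>" unfolding V_def using sqrt_v by simp
    moreover have "sqrt v < real_of_int \<lfloor>sqrt v\<rfloor> + 1" "1 \<le> \<lfloor>sqrt v\<rfloor>" using sqrt_v by linarith+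
    ultimately have "sqrt v \<le> 2 * real V" by linarith
    hence "sqrt v ^ 2 \<le> (2 * real V) ^ 2" using v by (intro power_mono) simp_all
    hence v_le: "v \<le> 4 * real V ^ 2" using v by (simp add: power_mult_distrib)
    have "real K ^ 2 * v \<le> real K ^ 2 * (4 * real V ^ 2)" using v_le by (intro mult_left_mono) simp_all
    also have "\<dots> = 4 * (real K * real V) ^ 2" by (simp add: power_mult_distrib)
    also have "\<dots> \<le> 4 * (2 * real n) ^ 2" using KV by (intro mult_left_mono power_mono) simp_all
    also have "\<dots> \<le> (16 * h) * v" using hv by (simp add: power_mult_distrib)
    finally show ?thesis using v by simp
  qed
  thus ?thesis using V_pos V2 unfolding K_def by (intro exI[of _ V]) simp
qed

lemma exists_prime_word:
  fixes n :: nat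
  assumes n: "1 \<le> n"
  shows "\<exists>p w. prime p \<and> 6 * n ^ 3 < p \<and> p \<le> 2 ^ w \<and> real w \<le> 10 * (1 + log 2 (real n))"
proof -
  have "2 \<le> 6 * n ^ 3" using n by (simp add: Suc_le_eq)
  then obtain p :: nat where p: "prime p" "6 * n ^ 3 < p" "p \<le> 2 * (6 * n ^ 3) ^ 3"
    using exists_prime_between_cube by blast
  define w where "w = nat \<lceil>log 2 (real p)\<rceil>"
  have p1: "1 \<le> real p" using p(2) by linarith
  have "real p = 2 powr log 2 (real p)" using p1 by simp
  also have "\<dots> \<le> 2 powr real w" unfolding w_def by (intro powr_mono) linarith+
  finally have "p \<le> 2 ^ w" by (simp add: powr_realpow flip: of_nat_le_iff)
  moreover have "real w \<le> 10 * (1 + log 2 (real n))"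
  proof -
    have "(6 * n ^ 3) ^ 3 = 216 * n ^ 9" by (simp add: power_mult_distrib flip: power_mult)
    hence "p \<le> 432 * n ^ 9" using p(3) by simp
    hence "real p \<le> 432 * real n ^ 9" by (metis of_nat_le_iff of_nat_mult of_nat_numeral of_nat_power)
    hence "real p \<le> 2 ^ 9 * real n ^ 9" by simp
    hence "log 2 (real p) \<le> log 2 (2 ^ 9 * real n ^ 9)" using p1 n by (subst log_le_cancel_iff) auto
    also have "\<dots> = 9 + 9 * log 2 (real n)"
      using n log_pow_cancel[of "2::real" 9] by (simp add: log_mult log_nat_power)
    finally have "log 2 (real p) \<le> 9 + 9 * log 2 (real n)" .
    moreover have "real w \<le> log 2 (real p) + 1"
      unfolding w_def using p1 ceiling_correct[of "log 2 (real p)"] by simp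
    moreover have "0 \<le> log 2 (real n)" using n by simp
    ultimately have "real w \<le> 10 + 10 * log 2 (real n)" by linarith
    thus ?thesis by simp
  qed
  ultimately show ?thesis using p by blast
qed

theorem theorem4p6:
  shows "\<exists>(c::real) (k::nat). \<forall>(n::nat) (h::real) (v::real).
     1 \<le> n \<longrightarrow> 1 \<le> h \<longrightarrow> 1 \<le> v \<longrightarrow> h * v \<ge> real n ^ 2 \<longrightarrow>
     (\<exists>H S init stepI stepH out help.
        tc_scheme n H S init stepI stepH out help \<and>
        real H \<le> c * h * (1 + log 2 (real n)) ^ k \<and>
        real S \<le> c * v * (1 + log 2 (real n)) ^ k)"
proof (rule exI[of _ 320], rule exI[of _ 1], intro allI impI)
  fix n :: nat and h v :: real
  assume n: "1 \<le> n" and h: "1 \<le> h" and v: "1 \<le> v" and hv: "h * v \<ge> real n ^ 2"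
  obtain V where V: "0 < V" "real (V\<^sup>2) \<le> v" "real (((n + V - 1) div V)\<^sup>2) \<le> 16 * h"
    using exists_block_width[OF n h v hv] by blast
  obtain p w where p: "prime p" "6 * n ^ 3 < p" "p \<le> 2 ^ w" and w: "real w \<le> 10 * (1 + log 2 (real n))"
    using exists_prime_word[OF n] by blast
  interpret triangle_protocol n V "int p" w
  proof
    show "6 * int n ^ 3 < int p" using p(2) by (metis of_nat_less_iff of_nat_mult of_nat_numeral of_nat_power)
    show "int p \<le> 2 ^ w" using p(3) by (metis of_nat_le_iff of_nat_numeral of_nat_power)
  qed (use V p in simp_all)
  obtain init stepI stepH out where scheme: "tc_scheme n help_length space_bits init stepI stepH out honest_help"
    using tc_scheme_exists by blast
  have "real help_length \<le> 320 * h * (1 + log 2 (real n))" "real space_bits \<le> 320 * v * (1 + log 2 (real n))"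
    using scheme_size_bounds[of h v] n V(2,3) w unfolding K_def by simp_all
  with scheme show "\<exists>H S init stepI stepH out help. tc_scheme n H S init stepI stepH out help \<and>
      real H \<le> 320 * h * (1 + log 2 (real n)) ^ 1 \<and> real S \<le> 320 * v * (1 + log 2 (real n)) ^ 1"
    by (intro exI[of _ help_length] exI[of _ space_bits] exI[of _ init] exI[of _ stepI] exI[of _ stepH]
        exI[of _ out] exI[of _ honest_help]) simp
qed

end
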